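(* Let $B>0$, $T\ge 2$, and let $\mathcal F$ be the set of all $1$-Lipschitz functions from $[0,1]$ to $[-B,B]$. Let $(x_t)$ be any sequence in $[0,1]$ and $(y_t)$ any real sequence with $\max_{1\le t\le T}|y_t|\le B$. Then the Dyadic Chaining Algorithm (described in the context) tuned with $\gamma=BT^{-1/3}$ and $M=\lceil\log_2(\gamma T/B)\rceil$ satisfies, for some absolute constant $c>0$, $$\sum_{t=1}^T(y_t-\hat y_t)^2-\inf_{f\in\mathcal F}\sum_{t=1}^T(y_t-f(x_t))^2\le c\max\{B,B^2\}\,T^{1/3}\log T.$$
   Context: Online protocol: at round $t$, $x_t$ is revealed, the forecaster predicts $\hat y_t$, then $y_t$ is revealed. Adaptive Multi-variable Exponentiated Gradient (AMEG) on $\Delta_{N_1}\times\cdots\times\Delta_{N_K}$ ($\Delta_N$ the probability simplex of $\mathbb R^N$) with gradient bounds $G^{(1)},\ldots,G^{(K)}>0$: start with uniform $\hat{\boldsymbol u}^{(k)}_1$; at each of its rounds $t$ it outputs $(\hat{\boldsymbol u}^{(k)}_t)_k$, receives a differentiable jointly convex loss $\ell_t$, sets $\eta^{(k)}_{t+1}=\frac{1}{G^{(k)}}\sqrt{\log N_k/(1+\sum_{s=1}^t\mathbb 1\{\sup|\nabla_{\boldsymbol u^{(k)}}\ell_s|>0\})}$ (sup of the absolute coordinates of the partial gradient over the whole domain) and $\hat u^{(k)}_{t+1,i}\propto\exp\big(-\eta^{(k)}_{t+1}\sum_{s=1}^t\partial_{u^{(k)}_i}\ell_s(\hat{\boldsymbol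 u}^{(1)}_s,\ldots,\hat{\boldsymbol u}^{(K)}_s)\big)$, normalized over $i$. Dyadic Chaining Algorithm: assume $1/\gamma$ and $2B/\gamma$ are integers. Let $I_a=[(a-1)\gamma,a\gamma)$, $a=1,\ldots,1/\gamma$ (the last one closed at $1$). For $m\ge1$, split $I_a$ into $2^m$ consecutive subintervals $I_a^{(m,n)}$, $n=1,\ldots,2^m$, of length $\gamma/2^m$. For each $a$ run an independent instance $\mathcal A_a$ that is fed only rounds $t$ with $x_t\in I_a$. Inside $\mathcal A_a$, for each $j\in\{0,\ldots,2B/\gamma\}$ run an AMEG instance $\mathcal B_{a,j}$ with blocks indexed by $(m,n)$, $1\le m\le M$, $1\le n\le 2^m$, each block $\boldsymbol u^{(m,n)}\in\Delta_2$, gradient bounds $G^{(m,n)}=16B\gamma/2^m$, and losses $$\ell_t(\boldsymbol u)=\Big(y_t-(-B+j\gamma)-\sum_{m=1}^M\sum_{n=1}^{2^m}\Big(u^{(m,n)}_1\tfrac{-\gamma}{2^{m-1}}+u^{(m,n)}_2\tfrac{\gamma}{2^{m-1}}\Big)\mathbb 1\{x_t\in I_a^{(m,n)}\}\Big)^2.$$ With its current weights $\hat{\boldsymbol u}^{(m,n)}_{t,a,j}$, let $\hat f_{t,a,j}(x)=-B+j\gamma+\sum_{m,n}\big(\hat u^{(m,n)}_{t,a,j,1}\frac{-\gamma}{2^{m-1}}+\hat u^{(m,n)}_{t,a,j,2}\frac{\gamma}{2^{m-1}}\big)\mathbb 1\{x\in I_a^{(m,n)}\}$. Aggregate them by exponential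 weights $\hat w_{t,a,j}\propto\exp\big(-\eta\sum_{s<t,\,x_s\in I_a}(y_s-\hat f_{s,a,j}(x_s))^2\big)$ with $\eta=1/(32B^2)$, giving $\hat f_{t,a}=\sum_j\hat w_{t,a,j}\hat f_{t,a,j}$. The prediction is $\hat y_t=\sum_a\hat f_{t,a}(x_t)\mathbb 1\{x_t\in I_a\}$. *)

theory Defs
  imports "HOL-Analysis.Analysis"
begin

text \<open>A point of the product of simplices is a function u :: 'k => nat => real; block k has
coordinates 1..Nk k.  Only the blocks in K and coordinates 1..Nk k are meaningful.\<close>

definition simplex_prod :: "'k set \<Rightarrow> ('k \<Rightarrow> nat) \<Rightarrow> ('k \<Rightarrow> nat \<Rightarrow> real) set" where
  "simplex_prod K Nk = {u. \<forall>k\<in>K. (\<forall>i\<in>{1..Nk k}. 0 \<le> u k i) \<and> (\<Sum>i=1..Nk k. u k i) = 1}"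

definition partial_coord :: "(('k \<Rightarrow> nat \<Rightarrow> real) \<Rightarrow> real) \<Rightarrow> 'k \<Rightarrow> nat \<Rightarrow> ('k \<Rightarrow> nat \<Rightarrow> real) \<Rightarrow> real" where
  "partial_coord L k i u = deriv (\<lambda>v. L (u(k := (u k)(i := v)))) (u k i)"

text \<open>Block k of loss L is active iff the sup over the domain of the absolute coordinates of the
partial gradient w.r.t. block k is positive, i.e. some coordinate of it is nonzero somewhere.\<close>
definition ameg_active :: "'k set \<Rightarrow> ('k \<Rightarrow> nat) \<Rightarrow> (('k \<Rightarrow> nat \<Rightarrow> real) \<Rightarrow> real) \<Rightarrow> 'k \<Rightarrow> bool" where
  "ameg_active K Nk L k = (\<exists>u\<in>simplex_prod K Nk. \<exists>i\<in>{1..Nk k}. partial_coord L k i u \<noteq> 0)"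

definition ameg_weights :: "'k set \<Rightarrow> ('k \<Rightarrow> nat) \<Rightarrow> ('k \<Rightarrow> real) \<Rightarrow> ('k \<Rightarrow> nat \<Rightarrow> real) \<Rightarrow> ('k \<Rightarrow> nat)
    \<Rightarrow> ('k \<Rightarrow> nat \<Rightarrow> real)" where
  "ameg_weights K Nk G S C = (\<lambda>k i.
     (let eta = (1 / G k) * sqrt (ln (real (Nk k)) / (1 + real (C k))) in
      if k \<in> K \<and> i \<in> {1..Nk k}
      then exp (- eta * S k i) / (\<Sum>i'=1..Nk k. exp (- eta * S k i'))
      else 0))"

text \<open>State before global round t: cumulative partial gradients (evaluated at the algorithm's own
iterates) and counts of active rounds, over the rounds s < t belonging to the set R of rounds
fed to the instance.\<close>
fun ameg_state :: "'k set \<Rightarrow> ('k \<Rightarrow> nat) \<Rightarrow> ('k \<Rightarrow> real) \<Rightarrow> (nat \<Rightarrow> ('k \<Rightarrow> nat \<Rightarrow> real) \<Rightarrow> real)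
    \<Rightarrow> nat set \<Rightarrow> nat \<Rightarrow> ('k \<Rightarrow> nat \<Rightarrow> real) \<times> ('k \<Rightarrow> nat)" where
  "ameg_state K Nk G L R 0 = (\<lambda>k i. 0, \<lambda>k. 0)"
| "ameg_state K Nk G L R (Suc t) =
     (let (S, C) = ameg_state K Nk G L R t;
          u = ameg_weights K Nk G S C
      in if t \<in> R
         then (\<lambda>k i. S k i + partial_coord (L t) k i u,
               \<lambda>k. C k + (if ameg_active K Nk (L t) k then 1 else 0))
         else (S, C))"

definition ameg_out :: "'k set \<Rightarrow> ('k \<Rightarrow> nat) \<Rightarrow> ('k \<Rightarrow> real) \<Rightarrow> (nat \<Rightarrow> ('k \<Rightarrow> nat \<Rightarrow> real) \<Rightarrow> real)
    \<Rightarrow> nat set \<Rightarrow> nat \<Rightarrow> ('k \<Rightarrow> nat \<Rightarrow> real)" where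
  "ameg_out K Nk G L R t = (case ameg_state K Nk G L R t of (S, C) \<Rightarrow> ameg_weights K Nk G S C)"

definition dc_I :: "real \<Rightarrow> nat \<Rightarrow> real set" where
  "dc_I \<gamma> a = (if real a * \<gamma> = 1 then {(real a - 1) * \<gamma> .. real a * \<gamma>}
                else {(real a - 1) * \<gamma> ..< real a * \<gamma>})"

definition dc_sub :: "real \<Rightarrow> nat \<Rightarrow> nat \<Rightarrow> nat \<Rightarrow> real set" where
  "dc_sub \<gamma> a m n =
     (let lo = (real a - 1) * \<gamma> + (real n - 1) * \<gamma> / 2 ^ m;
          hi = (real a - 1) * \<gamma> + real n * \<gamma> / 2 ^ m
      in dc_I \<gamma> a \<inter> (if n = 2 ^ m then {lo..hi} else {lo..<hi}))"

definition dc_blocks :: "nat \<Rightarrow> (nat \<times> nat) set" where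
  "dc_blocks M = {(m, n). 1 \<le> m \<and> m \<le> M \<and> 1 \<le> n \<and> n \<le> 2 ^ m}"

definition dc_f :: "real \<Rightarrow> real \<Rightarrow> nat \<Rightarrow> nat \<Rightarrow> nat \<Rightarrow> (nat \<times> nat \<Rightarrow> nat \<Rightarrow> real) \<Rightarrow> real \<Rightarrow> real" where
  "dc_f B \<gamma> M a j u z = - B + real j * \<gamma> +
     (\<Sum>(m, n)\<in>dc_blocks M. (u (m, n) 1 * (- \<gamma> / 2 ^ (m - 1)) + u (m, n) 2 * (\<gamma> / 2 ^ (m - 1)))
                             * indicator (dc_sub \<gamma> a m n) z)"

definition dc_loss :: "real \<Rightarrow> real \<Rightarrow> nat \<Rightarrow> nat \<Rightarrow> nat \<Rightarrow> (nat \<Rightarrow> real) \<Rightarrow> (nat \<Rightarrow> real) \<Rightarrow> nat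
    \<Rightarrow> (nat \<times> nat \<Rightarrow> nat \<Rightarrow> real) \<Rightarrow> real" where
  "dc_loss B \<gamma> M a j x y t u = (y t - dc_f B \<gamma> M a j u (x t))\<^sup>2"

text \<open>Rounds fed to A_a (rounds are numbered 1,2,...).\<close>
definition dc_rounds :: "real \<Rightarrow> nat \<Rightarrow> (nat \<Rightarrow> real) \<Rightarrow> nat set" where
  "dc_rounds \<gamma> a x = {t. 1 \<le> t \<and> x t \<in> dc_I \<gamma> a}"

definition dc_u :: "real \<Rightarrow> real \<Rightarrow> nat \<Rightarrow> nat \<Rightarrow> nat \<Rightarrow> (nat \<Rightarrow> real) \<Rightarrow> (nat \<Rightarrow> real) \<Rightarrow> nat
    \<Rightarrow> (nat \<times> nat \<Rightarrow> nat \<Rightarrow> real)" where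
  "dc_u B \<gamma> M a j x y t =
     ameg_out (dc_blocks M) (\<lambda>_. 2) (\<lambda>(m, n). 16 * B * \<gamma> / 2 ^ m)
              (dc_loss B \<gamma> M a j x y) (dc_rounds \<gamma> a x) t"

definition dc_fj :: "real \<Rightarrow> real \<Rightarrow> nat \<Rightarrow> nat \<Rightarrow> nat \<Rightarrow> (nat \<Rightarrow> real) \<Rightarrow> (nat \<Rightarrow> real) \<Rightarrow> nat \<Rightarrow> real \<Rightarrow> real" where
  "dc_fj B \<gamma> M a j x y t z = dc_f B \<gamma> M a j (dc_u B \<gamma> M a j x y t) z"

text \<open>Indices j range over {0..2B/gamma}, a over {1..1/gamma} (integers by assumption).\<close>
definition dc_J :: "real \<Rightarrow> real \<Rightarrow> nat" where
  "dc_J B \<gamma> = nat \<lfloor>2 * B / \<gamma>\<rfloor>"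

definition dc_A :: "real \<Rightarrow> nat" where
  "dc_A \<gamma> = nat \<lfloor>1 / \<gamma>\<rfloor>"

definition dc_cumloss :: "real \<Rightarrow> real \<Rightarrow> nat \<Rightarrow> nat \<Rightarrow> nat \<Rightarrow> (nat \<Rightarrow> real) \<Rightarrow> (nat \<Rightarrow> real) \<Rightarrow> nat \<Rightarrow> real" where
  "dc_cumloss B \<gamma> M a j x y t =
     (\<Sum>s\<in>{s. 1 \<le> s \<and> s < t \<and> x s \<in> dc_I \<gamma> a}. (y s - dc_fj B \<gamma> M a j x y s (x s))\<^sup>2)"

definition dc_w :: "real \<Rightarrow> real \<Rightarrow> nat \<Rightarrow> nat \<Rightarrow> nat \<Rightarrow> (nat \<Rightarrow> real) \<Rightarrow> (nat \<Rightarrow> real) \<Rightarrow> nat \<Rightarrow> real" where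
  "dc_w B \<gamma> M a j x y t =
     (let \<eta> = 1 / (32 * B\<^sup>2) in
      exp (- \<eta> * dc_cumloss B \<gamma> M a j x y t)
      / (\<Sum>j'=0..dc_J B \<gamma>. exp (- \<eta> * dc_cumloss B \<gamma> M a j' x y t)))"

definition dc_fa :: "real \<Rightarrow> real \<Rightarrow> nat \<Rightarrow> nat \<Rightarrow> (nat \<Rightarrow> real) \<Rightarrow> (nat \<Rightarrow> real) \<Rightarrow> nat \<Rightarrow> real \<Rightarrow> real" where
  "dc_fa B \<gamma> M a x y t z = (\<Sum>j=0..dc_J B \<gamma>. dc_w B \<gamma> M a j x y t * dc_fj B \<gamma> M a j x y t z)"

text \<open>Prediction at round t (depends on y only through y_1..y_{t-1}).\<close>
definition dc_pred :: "real \<Rightarrow> real \<Rightarrow> nat \<Rightarrow> (nat \<Rightarrow> real) \<Rightarrow> (nat \<Rightarrow> real) \<Rightarrow> nat \<Rightarrow> real" where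
  "dc_pred B \<gamma> M x y t = (\<Sum>a=1..dc_A \<gamma>. dc_fa B \<gamma> M a x y t (x t) * indicator (dc_I \<gamma> a) (x t))"

definition lip1_class :: "real \<Rightarrow> (real \<Rightarrow> real) set" where
  "lip1_class B = {f. (\<forall>z\<in>{0..1}. f z \<in> {-B..B}) \<and> (\<forall>z\<in>{0..1}. \<forall>w\<in>{0..1}. \<bar>f z - f w\<bar> \<le> \<bar>z - w\<bar>)}"

end

theory Submission
  imports Defs
begin

text \<open>
  On a cell \<open>I\<^sub>a\<close> of width \<open>\<gamma>\<close> every AMEG instance predicts a function that starts from a grid
  value \<open>-B + j\<gamma>\<close> and moves by at most \<open>\<gamma> / 2\<^sup>m\<^sup>-\<^sup>1\<close> on each level \<open>m\<close> of the dyadic tree.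
  A \<open>1\<close>-Lipschitz \<open>f\<close> is represented this way up to \<open>\<gamma> / 2\<^sup>M\<^sup>+\<^sup>1\<close> by chaining: each block
  stores the increment of \<open>f\<close> between the centres of a subinterval and of its parent. Since the
  gradient of block \<open>(m, n)\<close> scales like \<open>B\<gamma> / 2\<^sup>m\<close> and there are \<open>2\<^sup>m\<close> blocks on level \<open>m\<close>,
  AMEG competes with these weights up to \<open>O(B\<gamma>M sqrt n\<^sub>a)\<close>, and exponential weights, the square
  loss being exp-concave on bounded predictions, pick the best start value at the price
  \<open>O(B\<^sup>2 log(B/\<gamma>))\<close>. Summing over the \<open>1/\<gamma>\<close> cells with \<open>\<gamma> = B T\<^sup>-\<^sup>1\<^sup>/\<^sup>3\<close> and
  \<open>2\<^sup>M \<ge> T\<^sup>2\<^sup>/\<^sup>3\<close> balances all terms at \<open>T\<^sup>1\<^sup>/\<^sup>3 log T\<close>.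
\<close>

section \<open>Exponentiated gradient on two actions with an adaptive rate\<close>

definition eg_potential :: "real \<Rightarrow> real \<Rightarrow> real \<Rightarrow> real" where
  "eg_potential \<eta> S1 S2 = - (1/\<eta>) * ln ((exp (-\<eta>*S1) + exp (-\<eta>*S2)) / 2)"

lemma exp_le_one_plus_square:
  fixes x :: real assumes "\<bar>x\<bar> \<le> 1" shows "exp x \<le> 1 + x + x\<^sup>2"
proof (cases "x \<ge> 0")
  case True then show ?thesis using exp_bound assms by auto
next
  case False
  let ?h = "\<lambda>x. 1 + x + x\<^sup>2 - exp x"
  have "?h 0 \<le> ?h x"
  proof (rule DERIV_nonpos_imp_nonincreasing[of x 0 ?h])
    show "x \<le> 0" using False by simp
    fix z assume z: "x \<le> z" "z \<le> 0"
    have "DERIV ?h z :> 1 + 2*z - exp z"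
      by (rule derivative_eq_intros refl | simp)+
    moreover have "1 + 2*z - exp z \<le> 0" using exp_ge_add_one_self[of z] z by linarith
    ultimately show "\<exists>y. DERIV ?h z :> y \<and> y \<le> 0" by blast
  qed
  then show ?thesis by simp
qed

text \<open>The potential increases as the learning rate decreases: this is Jensen's inequality for
  the convex map \<open>b \<mapsto> b powr (\<eta>/\<eta>')\<close>.\<close>

lemma eg_potential_antimono:
  assumes "0 < \<eta>'" "\<eta>' \<le> \<eta>"
  shows "eg_potential \<eta> S1 S2 \<le> eg_potential \<eta>' S1 S2"
proof -
  define b1 where "b1 = exp (-\<eta>'*S1)"
  define b2 where "b2 = exp (-\<eta>'*S2)"
  define p where "p = \<eta>/\<eta>'"
  have p1: "p \<ge> 1" using assms by (simp add: p_def)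
  have bpos: "b1 > 0" "b2 > 0" by (auto simp: b1_def b2_def)
  have e1: "exp (-\<eta>*S1) = b1 powr p" and e2: "exp (-\<eta>*S2) = b2 powr p"
    unfolding b1_def b2_def p_def powr_def using assms by (simp_all add: field_simps)
  have "convex_on {0<..} (\<lambda>x::real. x powr p)" using powr_convex p1 by blast
  then have "((1/2) * b1 + (1/2) * b2) powr p \<le> (1/2) * b1 powr p + (1/2) * b2 powr p"
    using convex_onD[of "{0<..}" _ "1/2" b1 b2] bpos by simp
  then have "((b1 + b2)/2) powr p \<le> (b1 powr p + b2 powr p)/2" by (simp add: field_simps)
  then have "ln (((b1 + b2)/2) powr p) \<le> ln ((b1 powr p + b2 powr p)/2)"
    using bpos by (subst ln_le_cancel_iff) (auto intro: add_pos_pos)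
  then have "(\<eta>/\<eta>') * ln ((b1+b2)/2) \<le> ln ((exp (-\<eta>*S1) + exp (-\<eta>*S2))/2)"
    using bpos by (simp add: ln_powr flip: e1 e2 p_def)
  then have "(1/\<eta>') * ln ((b1+b2)/2) \<le> (1/\<eta>) * ln ((exp (-\<eta>*S1) + exp (-\<eta>*S2))/2)"
    using assms by (simp add: field_simps)
  then show ?thesis unfolding eg_potential_def b1_def b2_def by simp
qed

lemma eg_potential_le_convex_comb:
  assumes "\<eta> > 0" "u1 \<ge> 0" "u2 \<ge> 0" "u1 + u2 = 1"
  shows "eg_potential \<eta> S1 S2 \<le> u1 * S1 + u2 * S2 + ln 2 / \<eta>"
proof -
  have le: "eg_potential \<eta> S1 S2 \<le> S + ln 2 / \<eta>"
    if "exp (-\<eta>*S) \<le> exp (-\<eta>*S1) + exp (-\<eta>*S2)" for S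
  proof -
    have "ln (exp (-\<eta>*S) / 2) \<le> ln ((exp (-\<eta>*S1) + exp (-\<eta>*S2)) / 2)"
      using that by (subst ln_le_cancel_iff) (auto intro: add_pos_pos)
    then have "-\<eta>*S - ln 2 \<le> ln ((exp (-\<eta>*S1) + exp (-\<eta>*S2)) / 2)" by (simp add: ln_div)
    then show ?thesis using assms(1) by (simp add: eg_potential_def field_simps)
  qed
  have "eg_potential \<eta> S1 S2 \<le> S1 + ln 2 / \<eta>" "eg_potential \<eta> S1 S2 \<le> S2 + ln 2 / \<eta>"
    by (rule le; simp)+
  then have "u1 * eg_potential \<eta> S1 S2 + u2 * eg_potential \<eta> S1 S2
      \<le> u1 * (S1 + ln 2 / \<eta>) + u2 * (S2 + ln 2 / \<eta>)"
    using assms by (intro add_mono mult_left_mono) auto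
  also have "\<dots> = u1 * S1 + u2 * S2 + (u1 + u2) * (ln 2 / \<eta>)"
    by (simp add: algebra_simps add_divide_distrib)
  finally show ?thesis using assms(4) by (simp flip: distrib_right)
qed

text \<open>One step of exponential weights: the linear loss is paid for by the increase of the potential
  up to the second-order term \<open>\<eta> G\<^sup>2\<close>, via \<open>e\<^sup>x \<le> 1 + x + x\<^sup>2\<close> and \<open>ln x \<le> x - 1\<close>.\<close>

lemma eg_potential_step:
  fixes S1 S2 :: real
  assumes \<eta>: "\<eta> > 0" and g1: "\<bar>g1\<bar> \<le> G" and g2: "\<bar>g2\<bar> \<le> G" and \<eta>G: "\<eta> * G \<le> 1"
  defines "w1 \<equiv> exp (-\<eta>*S1) / (exp (-\<eta>*S1) + exp (-\<eta>*S2))"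
  defines "w2 \<equiv> exp (-\<eta>*S2) / (exp (-\<eta>*S1) + exp (-\<eta>*S2))"
  shows "g1 * w1 + g2 * w2 \<le> eg_potential \<eta> (S1+g1) (S2+g2) - eg_potential \<eta> S1 S2 + \<eta> * G\<^sup>2"
proof -
  define D where "D = exp (-\<eta>*S1) + exp (-\<eta>*S2)"
  define A where "A = w1 * exp (-\<eta>*g1) + w2 * exp (-\<eta>*g2)"
  have Dpos: "D > 0" by (simp add: D_def add_pos_pos)
  have w: "w1 > 0" "w2 > 0" "w1 + w2 = 1" using Dpos
    by (auto simp: w1_def w2_def D_def simp flip: add_divide_distrib)
  have exp_le: "exp (-\<eta>*g) \<le> 1 + (-\<eta>*g) + (\<eta>*G)\<^sup>2" if "\<bar>g\<bar> \<le> G" for g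
  proof -
    have "\<bar>\<eta>*g\<bar> \<le> \<eta>*G" using \<eta> that by (simp add: abs_mult mult_left_mono)
    then have "\<bar>-\<eta>*g\<bar> \<le> 1" "(-\<eta>*g)\<^sup>2 \<le> (\<eta>*G)\<^sup>2" using \<eta>G
      by (auto simp flip: abs_le_square_iff)
    then show ?thesis using exp_le_one_plus_square[of "-\<eta>*g"] by linarith
  qed
  have "A \<le> w1 * (1 + (-\<eta>*g1) + (\<eta>*G)\<^sup>2) + w2 * (1 + (-\<eta>*g2) + (\<eta>*G)\<^sup>2)"
    unfolding A_def using exp_le[OF g1] exp_le[OF g2] w
    by (intro add_mono mult_left_mono) auto
  also have "\<dots> = (w1 + w2) - \<eta> * (g1*w1 + g2*w2) + (w1 + w2) * (\<eta>*G)\<^sup>2"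
    by (simp add: algebra_simps)
  also have "\<dots> = 1 - \<eta> * (g1*w1 + g2*w2) + (\<eta>*G)\<^sup>2" using w by simp
  finally have A_le: "A \<le> 1 - \<eta> * (g1*w1 + g2*w2) + (\<eta>*G)\<^sup>2" .
  have Apos: "A > 0" unfolding A_def using w by (simp add: add_pos_pos)
  have ln_A: "ln A \<le> - \<eta> * (g1*w1 + g2*w2) + (\<eta>*G)\<^sup>2"
    using ln_le_minus_one[OF Apos] A_le by linarith
  have "(exp (-\<eta>*(S1+g1)) + exp (-\<eta>*(S2+g2)))/2 = (D/2) * A"
    using Dpos unfolding A_def w1_def w2_def D_def[symmetric]
    by (simp add: field_simps exp_add[symmetric] algebra_simps)
  moreover have "ln ((D/2) * A) = ln (D/2) + ln A" using Dpos Apos by (intro ln_mult_pos) auto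
  ultimately have "eg_potential \<eta> (S1+g1) (S2+g2) - eg_potential \<eta> S1 S2 = - (1/\<eta>) * ln A"
    unfolding eg_potential_def D_def[symmetric] by (simp add: algebra_simps add_divide_distrib)
  then have "\<eta> * (g1 * w1 + g2 * w2)
      \<le> \<eta> * (eg_potential \<eta> (S1+g1) (S2+g2) - eg_potential \<eta> S1 S2 + \<eta> * G\<^sup>2)"
    using ln_A \<eta> by (simp add: field_simps power2_eq_square)
  then show ?thesis using \<eta> by simp
qed

lemma two_sqrt_step:
  fixes c :: real assumes "c \<ge> 0"
  shows "2 * sqrt c + 1 / sqrt (1 + c) \<le> 2 * sqrt (1 + c)"
proof -
  have p: "sqrt (1+c) > 0" using assms by simp
  have "sqrt c * sqrt (1 + c) = sqrt (c * (1+c))" by (simp add: real_sqrt_mult)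
  also have "\<dots> \<le> sqrt ((c + 1/2)^2)"
    using assms by (intro real_sqrt_le_mono) (simp add: power2_eq_square algebra_simps)
  also have "\<dots> = c + 1/2" using assms by simp
  finally have "(2 * sqrt c + 1 / sqrt (1 + c)) * sqrt (1+c) \<le> (2 * sqrt (1 + c)) * sqrt (1+c)"
    using p assms by (simp add: algebra_simps power2_eq_square)
  then show ?thesis using p by (simp add: mult_le_cancel_right)
qed

text \<open>The adaptive-rate argument: lowering the rate only raises the potential, and the
  second-order terms \<open>\<eta>\<^sub>t G\<^sup>2 \<le> G / sqrt (1 + C\<^sub>t)\<close> of the active rounds telescope to
  \<open>2 G sqrt C\<close> by \<open>two_sqrt_step\<close>.\<close>

lemma eg2_cumulative_loss_le:
  fixes G :: real and g :: "nat \<Rightarrow> nat \<Rightarrow> real" and act :: "nat \<Rightarrow> bool"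
    and S :: "nat \<Rightarrow> nat \<Rightarrow> real" and C :: "nat \<Rightarrow> nat" and T :: nat
  assumes G: "G > 0"
    and S_Suc: "\<And>t i. S (Suc t) i = S t i + g t i"
    and C_Suc: "\<And>t. C (Suc t) = C t + (if act t then 1 else 0)"
    and g_bound: "\<And>t i. t < T \<Longrightarrow> i \<in> {1,2} \<Longrightarrow> \<bar>g t i\<bar> \<le> G"
    and g_inactive: "\<And>t. t < T \<Longrightarrow> \<not> act t \<Longrightarrow> g t 1 = 0 \<and> g t 2 = 0"
    and C_0: "C 0 = 0" and S_0: "S 0 1 = 0" "S 0 2 = 0"
  defines "\<eta> \<equiv> \<lambda>t. sqrt (ln 2 / (1 + real (C t))) / G"
  defines "w \<equiv> \<lambda>t i. exp (- \<eta> t * S t i) / (exp (- \<eta> t * S t 1) + exp (- \<eta> t * S t 2))"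
  assumes "n \<le> T"
  shows "(\<Sum>t<n. g t 1 * w t 1 + g t 2 * w t 2)
           \<le> eg_potential (\<eta> n) (S n 1) (S n 2) + 2 * G * sqrt (C n)"
  using \<open>n \<le> T\<close>
proof (induction n)
  case 0
  show ?case using S_0 by (simp add: eg_potential_def C_0)
next
  case (Suc n)
  have nT: "n < T" using Suc by simp
  have IH: "(\<Sum>t<n. g t 1 * w t 1 + g t 2 * w t 2)
      \<le> eg_potential (\<eta> n) (S n 1) (S n 2) + 2 * G * sqrt (C n)"
    using Suc by simp
  have \<eta>_pos: "\<And>t. \<eta> t > 0" unfolding \<eta>_def using G by simp
  show ?case
  proof (cases "act n")
    case False
    then have "g n 1 = 0" "g n 2 = 0" using g_inactive nT by auto
    moreover have "S (Suc n) 1 = S n 1" "S (Suc n) 2 = S n 2" "C (Suc n) = C n"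
      using S_Suc C_Suc False calculation by auto
    ultimately show ?thesis using IH by (simp add: \<eta>_def)
  next
    case True
    have C_Suc_n: "C (Suc n) = C n + 1" using C_Suc True by simp
    have l2: "ln (2::real) > 0" "ln (2::real) < 1" using ln_2_less_1 by auto
    have \<eta>G: "\<eta> n * G = sqrt (ln 2 / (1 + real (C n)))" using G by (simp add: \<eta>_def)
    then have \<eta>G_le: "\<eta> n * G \<le> 1" using l2 by (simp add: divide_le_eq)
    have step: "g n 1 * w n 1 + g n 2 * w n 2
        \<le> eg_potential (\<eta> n) (S n 1 + g n 1) (S n 2 + g n 2) - eg_potential (\<eta> n) (S n 1) (S n 2)
          + \<eta> n * G\<^sup>2"
      unfolding w_def using eg_potential_step[OF \<eta>_pos g_bound[OF nT] g_bound[OF nT] \<eta>G_le] by simp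
    have "\<eta> (Suc n) \<le> \<eta> n" unfolding \<eta>_def C_Suc_n using G l2
      by (intro divide_right_mono real_sqrt_le_mono divide_left_mono) auto
    then have rate: "eg_potential (\<eta> n) (S (Suc n) 1) (S (Suc n) 2)
        \<le> eg_potential (\<eta> (Suc n)) (S (Suc n) 1) (S (Suc n) 2)"
      by (rule eg_potential_antimono[OF \<eta>_pos])
    have "\<eta> n * G\<^sup>2 = G * sqrt (ln 2 / (1 + real (C n)))" using \<eta>G by (simp add: power2_eq_square)
    also have "\<dots> \<le> G * sqrt (1 / (1 + real (C n)))" using G l2
      by (intro mult_left_mono real_sqrt_le_mono divide_right_mono) auto
    also have "\<dots> = G / sqrt (1 + real (C n))" by (simp add: real_sqrt_divide)
    finally have second_order: "\<eta> n * G\<^sup>2 \<le> G / sqrt (1 + real (C n))" .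
    have "G * (2 * sqrt (C n) + 1 / sqrt (1 + real (C n))) \<le> G * (2 * sqrt (1 + real (C n)))"
      using two_sqrt_step[of "real (C n)"] G by (intro mult_left_mono) auto
    then have "2 * G * sqrt (C n) + G / sqrt (1 + real (C n)) \<le> 2 * G * sqrt (C (Suc n))"
      unfolding C_Suc_n by (simp add: algebra_simps)
    then show ?thesis
      using IH step rate[unfolded S_Suc] second_order by (simp add: S_Suc)
  qed
qed

lemma eg2_regret:
  fixes G :: real and g :: "nat \<Rightarrow> nat \<Rightarrow> real" and act :: "nat \<Rightarrow> bool"
    and S :: "nat \<Rightarrow> nat \<Rightarrow> real" and C :: "nat \<Rightarrow> nat" and T :: nat
  assumes G: "G > 0"
    and S_Suc: "\<And>t i. S (Suc t) i = S t i + g t i"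
    and C_Suc: "\<And>t. C (Suc t) = C t + (if act t then 1 else 0)"
    and g_bound: "\<And>t i. t < T \<Longrightarrow> i \<in> {1,2} \<Longrightarrow> \<bar>g t i\<bar> \<le> G"
    and g_inactive: "\<And>t. t < T \<Longrightarrow> \<not> act t \<Longrightarrow> g t 1 = 0 \<and> g t 2 = 0"
    and C_0: "C 0 = 0" and S_0: "S 0 1 = 0" "S 0 2 = 0"
    and u: "u1 \<ge> 0" "u2 \<ge> 0" "u1 + u2 = 1"
  defines "\<eta> \<equiv> \<lambda>t. sqrt (ln 2 / (1 + real (C t))) / G"
  defines "w \<equiv> \<lambda>t i. exp (- \<eta> t * S t i) / (exp (- \<eta> t * S t 1) + exp (- \<eta> t * S t 2))"
  shows "(\<Sum>t<T. g t 1 * (w t 1 - u1) + g t 2 * (w t 2 - u2)) \<le> 3 * G * sqrt (1 + real (C T))"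
proof -
  have loss: "(\<Sum>t<T. g t 1 * w t 1 + g t 2 * w t 2)
      \<le> eg_potential (\<eta> T) (S T 1) (S T 2) + 2 * G * sqrt (C T)"
    using eg2_cumulative_loss_le[OF G S_Suc C_Suc g_bound g_inactive C_0 S_0] unfolding \<eta>_def w_def
    by blast
  have S_sum: "S n i = S 0 i + (\<Sum>t<n. g t i)" for n i by (induction n) (auto simp: S_Suc)
  have \<eta>_pos: "\<eta> T > 0" unfolding \<eta>_def using G by simp
  have l2: "ln (2::real) > 0" "ln (2::real) < 1" using ln_2_less_1 by auto
  have "ln 2 / \<eta> T = G * (ln 2 / sqrt (ln 2 / (1 + real (C T))))" unfolding \<eta>_def using G by simp
  also have "ln 2 / sqrt (ln 2 / (1 + real (C T))) = sqrt (ln 2) * sqrt (1 + real (C T))"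
    using l2 by (simp add: real_sqrt_divide field_simps)
  also have "\<dots> \<le> 1 * sqrt (1 + real (C T))" using l2 by (intro mult_right_mono) auto
  finally have "ln 2 / \<eta> T \<le> G * sqrt (1 + real (C T))" using G by simp
  then have comparator: "eg_potential (\<eta> T) (S T 1) (S T 2)
      \<le> u1 * (\<Sum>t<T. g t 1) + u2 * (\<Sum>t<T. g t 2) + G * sqrt (1 + real (C T))"
    using eg_potential_le_convex_comb[OF \<eta>_pos u, of "S T 1" "S T 2"] S_sum[of T] S_0 by simp
  have "2 * G * sqrt (C T) \<le> 2 * G * sqrt (1 + real (C T))" using G by simp
  then show ?thesis using loss comparator
    by (simp add: algebra_simps sum.distrib sum_subtractf sum_distrib_left)
qed

section \<open>AMEG on products of two-point simplices\<close>

lemma simplex_prod_two_iff: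
  "u \<in> simplex_prod K (\<lambda>_. 2) \<longleftrightarrow> (\<forall>k\<in>K. 0 \<le> u k 1 \<and> 0 \<le> u k 2 \<and> u k 1 + u k 2 = 1)"
proof -
  have "{1..2::nat} = {1,2}" by auto
  then show ?thesis unfolding simplex_prod_def by auto
qed

lemma ameg_weights_two:
  assumes "k \<in> K" "i \<in> {1,2}"
  shows "ameg_weights K (\<lambda>_. 2) G S C k i =
    exp (- (sqrt (ln 2 / (1 + real (C k))) / G k) * S k i) /
      (exp (- (sqrt (ln 2 / (1 + real (C k))) / G k) * S k 1)
        + exp (- (sqrt (ln 2 / (1 + real (C k))) / G k) * S k 2))"
proof -
  have "{1..2::nat} = {1,2}" by auto
  then show ?thesis using assms unfolding ameg_weights_def Let_def by auto
qed

lemma ameg_weights_two_mem: "ameg_weights K (\<lambda>_. 2) G S C \<in> simplex_prod K (\<lambda>_. 2)"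
proof -
  have "exp p + exp q \<noteq> 0" for p q :: real
    using add_pos_pos[OF exp_gt_zero exp_gt_zero, of p q] by linarith
  then show ?thesis unfolding simplex_prod_two_iff
    by (auto simp: ameg_weights_two add_divide_distrib[symmetric])
qed

lemma ameg_out_two_mem: "ameg_out K (\<lambda>_. 2) G L R t \<in> simplex_prod K (\<lambda>_. 2)"
  unfolding ameg_out_def by (simp add: ameg_weights_two_mem split: prod.split)

text \<open>Each block of AMEG is an instance of \<open>eg2_regret\<close> fed with its own partial gradients,
  which vanish on the rounds where the block is inactive.\<close>

lemma ameg_two_block_regret:
  fixes K :: "'k set" and G :: "'k \<Rightarrow> real" and L :: "nat \<Rightarrow> ('k \<Rightarrow> nat \<Rightarrow> real) \<Rightarrow> real"
    and R :: "nat set" and T :: nat and k :: 'k and us :: "'k \<Rightarrow> nat \<Rightarrow> real"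
  defines "u \<equiv> ameg_out K (\<lambda>_. 2) G L R"
  defines "g \<equiv> \<lambda>t i. partial_coord (L t) k i (u t)"
  assumes k: "k \<in> K" and G: "G k > 0"
    and g_bound: "\<And>t i. t \<in> R \<Longrightarrow> t \<le> T \<Longrightarrow> i \<in> {1,2} \<Longrightarrow> \<bar>g t i\<bar> \<le> G k"
    and us: "us k 1 \<ge> 0" "us k 2 \<ge> 0" "us k 1 + us k 2 = 1"
  shows "(\<Sum>t\<in>{t\<in>R. t \<le> T}. g t 1 * (u t k 1 - us k 1) + g t 2 * (u t k 2 - us k 2))
           \<le> 3 * G k * sqrt (1 + real (card {t\<in>R. t \<le> T}))"
proof -
  define S where "S t = fst (ameg_state K (\<lambda>_. 2) G L R t) k" for t
  define C where "C t = snd (ameg_state K (\<lambda>_. 2) G L R t) k" for t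
  define act where "act t \<longleftrightarrow> t \<in> R \<and> ameg_active K (\<lambda>_. 2) (L t) k" for t
  define g' where "g' t i = (if t \<in> R then g t i else 0)" for t i
  have u: "u t = ameg_weights K (\<lambda>_. 2) G (fst (ameg_state K (\<lambda>_. 2) G L R t))
                   (snd (ameg_state K (\<lambda>_. 2) G L R t))" for t
    unfolding u_def ameg_out_def by (simp split: prod.split)
  have S_Suc: "S (Suc t) i = S t i + g' t i" for t i
    unfolding S_def g'_def g_def u by (simp add: Let_def split: prod.split)
  have C_Suc: "C (Suc t) = C t + (if act t then 1 else 0)" for t
    unfolding C_def act_def by (simp add: Let_def split: prod.split)
  have g'_bound: "\<bar>g' t i\<bar> \<le> G k" if "t < T + 1" "i \<in> {1,2}" for t i
    using g_bound[of t i] that G by (auto simp: g'_def)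
  have g'_inactive: "g' t 1 = 0 \<and> g' t 2 = 0" if "\<not> act t" for t
    using that ameg_out_two_mem[of K G L R t]
    unfolding g'_def act_def ameg_active_def g_def u_def by auto
  have w: "u t k i = exp (- (sqrt (ln 2 / (1 + real (C t))) / G k) * S t i) /
      (exp (- (sqrt (ln 2 / (1 + real (C t))) / G k) * S t 1)
        + exp (- (sqrt (ln 2 / (1 + real (C t))) / G k) * S t 2))" if "i \<in> {1,2}" for t i
    unfolding u S_def C_def using ameg_weights_two[OF k that] by simp
  have regret: "(\<Sum>t<T+1. g' t 1 * (u t k 1 - us k 1) + g' t 2 * (u t k 2 - us k 2))
      \<le> 3 * G k * sqrt (1 + real (C (T+1)))"
    using eg2_regret[where g=g' and S=S and C=C and act=act and T="T+1", OF G S_Suc C_Suc g'_bound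
        g'_inactive _ _ _ us]
    by (simp add: w S_def C_def)
  have sum_eq: "(\<Sum>t<T+1. g' t 1 * (u t k 1 - us k 1) + g' t 2 * (u t k 2 - us k 2))
      = (\<Sum>t\<in>{t\<in>R. t \<le> T}. g t 1 * (u t k 1 - us k 1) + g t 2 * (u t k 2 - us k 2))"
  proof -
    have "{t\<in>R. t \<le> T} = {t\<in>{..<T+1}. t \<in> R}" by auto
    then have "(\<Sum>t\<in>{t\<in>R. t \<le> T}. g t 1 * (u t k 1 - us k 1) + g t 2 * (u t k 2 - us k 2))
        = (\<Sum>t<T+1. if t \<in> R then g t 1 * (u t k 1 - us k 1) + g t 2 * (u t k 2 - us k 2) else 0)"
      by (simp only: sum.inter_filter finite_lessThan)
    then show ?thesis by (simp only: g'_def) (rule sum.cong; simp)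
  qed
  have C_le: "C t \<le> card {s\<in>R. s < t}" for t
  proof (induction t)
    case 0
    show ?case by (simp add: C_def)
  next
    case (Suc t)
    have fin: "finite {s\<in>R. s < t}" by simp
    show ?case
    proof (cases "t \<in> R")
      case False
      then have "{s\<in>R. s < Suc t} = {s\<in>R. s < t}" by (auto simp: less_Suc_eq)
      then show ?thesis using Suc False by (simp add: C_Suc act_def)
    next
      case True
      then have "{s\<in>R. s < Suc t} = insert t {s\<in>R. s < t}" by (auto simp: less_Suc_eq)
      then show ?thesis using Suc fin by (simp add: C_Suc)
    qed
  qed
  have "{s\<in>R. s < T + 1} = {t\<in>R. t \<le> T}" by auto
  then have "sqrt (1 + real (C (T+1))) \<le> sqrt (1 + real (card {t\<in>R. t \<le> T}))"
    using C_le[of "T+1"] by simp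
  then have "3 * G k * sqrt (1 + real (C (T+1))) \<le> 3 * G k * sqrt (1 + real (card {t\<in>R. t \<le> T}))"
    using G by (intro mult_left_mono) auto
  then show ?thesis using regret sum_eq by linarith
qed

section \<open>Exponential weights for the square loss\<close>

lemma exp_neg_square_concave:
  fixes \<eta> r y :: real
  assumes \<eta>: "\<eta> > 0" and r: "2 * \<eta> * r\<^sup>2 \<le> 1"
  shows "concave_on {y - r .. y + r} (\<lambda>z. exp (- \<eta> * (y - z)\<^sup>2))"
proof (rule f''_le0_imp_concave[where f' = "\<lambda>z. exp (- \<eta> * (y - z)\<^sup>2) * (2 * \<eta> * (y - z))"
      and f'' = "\<lambda>z. exp (- \<eta> * (y - z)\<^sup>2) * ((2 * \<eta> * (y - z))\<^sup>2 - 2 * \<eta>)"])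
  fix z :: real assume z: "z \<in> {y - r..y + r}"
  show "((\<lambda>z. exp (- \<eta> * (y - z)\<^sup>2)) has_real_derivative
      exp (- \<eta> * (y - z)\<^sup>2) * (2 * \<eta> * (y - z))) (at z)"
    by (rule derivative_eq_intros refl | simp)+ (simp add: algebra_simps)
  show "((\<lambda>z. exp (- \<eta> * (y - z)\<^sup>2) * (2 * \<eta> * (y - z))) has_real_derivative
      exp (- \<eta> * (y - z)\<^sup>2) * ((2 * \<eta> * (y - z))\<^sup>2 - 2 * \<eta>)) (at z)"
    by (rule derivative_eq_intros refl | simp)+ (simp add: algebra_simps power2_eq_square)
  have "(y - z)\<^sup>2 \<le> r\<^sup>2" using z by (auto simp: abs_le_square_iff[symmetric] abs_le_iff)
  then have "2 * \<eta> * (y - z)\<^sup>2 \<le> 1" using \<eta> r by (smt (verit) mult_left_mono)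
  then have "2 * \<eta> * (2 * \<eta> * (y - z)\<^sup>2) \<le> 2 * \<eta> * 1" using \<eta> by (intro mult_left_mono) auto
  moreover have "(2 * \<eta> * (y - z))\<^sup>2 = 2 * \<eta> * (2 * \<eta> * (y - z)\<^sup>2)"
    by (simp add: power2_eq_square algebra_simps)
  ultimately have "(2 * \<eta> * (y - z))\<^sup>2 \<le> 2 * \<eta>" by simp
  then show "exp (- \<eta> * (y - z)\<^sup>2) * ((2 * \<eta> * (y - z))\<^sup>2 - 2 * \<eta>) \<le> 0"
    by (simp add: mult_nonneg_nonpos)
qed simp

text \<open>Exp-concavity of the square loss makes exponential weights pay at most the decrease of
  \<open>ln W / \<eta>\<close> in a round, where \<open>W\<close> is the total weight.\<close>

lemma ewa_square_loss_round:
  fixes \<eta> r y :: real and A :: "'a set" and L p :: "'a \<Rightarrow> real"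
  assumes \<eta>: "\<eta> > 0" and r: "2 * \<eta> * r\<^sup>2 \<le> 1" and A: "finite A" "A \<noteq> {}"
    and p: "\<And>j. j \<in> A \<Longrightarrow> \<bar>y - p j\<bar> \<le> r"
  shows "(y - (\<Sum>j\<in>A. exp (- \<eta> * L j) / (\<Sum>i\<in>A. exp (- \<eta> * L i)) * p j))\<^sup>2
           \<le> (ln (\<Sum>j\<in>A. exp (- \<eta> * L j)) - ln (\<Sum>j\<in>A. exp (- \<eta> * (L j + (y - p j)\<^sup>2)))) / \<eta>"
proof -
  define W where "W = (\<Sum>i\<in>A. exp (- \<eta> * L i))"
  define w where "w j = exp (- \<eta> * L j) / W" for j
  define \<phi> where "\<phi> z = exp (- \<eta> * (y - z)\<^sup>2)" for z
  have W_pos: "W > 0" unfolding W_def using A by (intro sum_pos) auto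
  have w: "w j \<ge> 0" "sum w A = 1" for j
    using W_pos by (auto simp: w_def W_def simp flip: sum_divide_distrib)
  have "p j \<in> {y - r .. y + r}" if "j \<in> A" for j using p[OF that] by (auto simp: abs_le_iff)
  then have jensen: "(\<Sum>j\<in>A. w j * \<phi> (p j)) \<le> \<phi> (\<Sum>j\<in>A. w j * p j)"
    using concave_on_sum[OF A exp_neg_square_concave[OF \<eta> r] w(2)] w(1) unfolding \<phi>_def by simp
  have next_W: "(\<Sum>j\<in>A. exp (- \<eta> * (L j + (y - p j)\<^sup>2))) = W * (\<Sum>j\<in>A. w j * \<phi> (p j))"
    using W_pos by (simp add: w_def \<phi>_def sum_distrib_left algebra_simps exp_add[symmetric])
  have "(\<Sum>j\<in>A. w j * \<phi> (p j)) > 0"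
    using next_W W_pos A by (metis exp_gt_zero sum_pos zero_less_mult_pos)
  then have "ln (\<Sum>j\<in>A. w j * \<phi> (p j)) \<le> - \<eta> * (y - (\<Sum>j\<in>A. w j * p j))\<^sup>2"
    using jensen by (simp add: \<phi>_def ln_le_cancel_iff[symmetric])
  moreover have "ln (W * (\<Sum>j\<in>A. w j * \<phi> (p j))) = ln W + ln (\<Sum>j\<in>A. w j * \<phi> (p j))"
    using W_pos \<open>(\<Sum>j\<in>A. w j * \<phi> (p j)) > 0\<close> by (simp add: ln_mult_pos)
  ultimately have "(y - (\<Sum>j\<in>A. w j * p j))\<^sup>2 \<le> (ln W - ln (W * (\<Sum>j\<in>A. w j * \<phi> (p j)))) / \<eta>"
    using \<eta> by (simp add: field_simps)
  then show ?thesis unfolding next_W by (simp only: w_def W_def)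
qed

lemma ewa_square_loss_regret:
  fixes \<eta> r :: real and P :: "nat \<Rightarrow> bool" and y :: "nat \<Rightarrow> real" and p :: "nat \<Rightarrow> nat \<Rightarrow> real"
    and J T j0 :: nat
  assumes \<eta>: "\<eta> > 0" and r: "2 * \<eta> * r\<^sup>2 \<le> 1" and j0: "j0 \<le> J"
    and p: "\<And>t j. 1 \<le> t \<Longrightarrow> t \<le> T \<Longrightarrow> P t \<Longrightarrow> j \<le> J \<Longrightarrow> \<bar>y t - p t j\<bar> \<le> r"
  defines "L \<equiv> \<lambda>t j. (\<Sum>s\<in>{s. 1 \<le> s \<and> s < t \<and> P s}. (y s - p s j)\<^sup>2)"
  defines "yh \<equiv> \<lambda>t. (\<Sum>j=0..J. exp (- \<eta> * L t j) / (\<Sum>i=0..J. exp (- \<eta> * L t i)) * p t j)"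
  shows "(\<Sum>t\<in>{t. 1 \<le> t \<and> t \<le> T \<and> P t}. (y t - yh t)\<^sup>2) \<le> L (T+1) j0 + ln (real J + 1) / \<eta>"
proof -
  define W where "W t = (\<Sum>j=0..J. exp (- \<eta> * L t j))" for t
  have W_pos: "W t > 0" for t unfolding W_def by (intro sum_pos) auto
  have "(\<Sum>t\<in>{t. 1 \<le> t \<and> t \<le> n \<and> P t}. (y t - yh t)\<^sup>2) \<le> (ln (W 1) - ln (W (n+1))) / \<eta>"
    if "n \<le> T" for n
    using that
  proof (induction n)
    case 0
    have "{t. 1 \<le> t \<and> t \<le> (0::nat) \<and> P t} = {}" by auto
    then show ?case by (simp only:) simp
  next
    case (Suc n)
    have fin: "finite {t. 1 \<le> t \<and> t \<le> n \<and> P t}" "finite {s. 1 \<le> s \<and> s < n + 1 \<and> P s}"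
      by (auto intro: finite_subset[of _ "{..n}"])
    show ?case
    proof (cases "P (Suc n)")
      case False
      then have "{t. 1 \<le> t \<and> t \<le> Suc n \<and> P t} = {t. 1 \<le> t \<and> t \<le> n \<and> P t}"
        "{s. 1 \<le> s \<and> s < Suc n + 1 \<and> P s} = {s. 1 \<le> s \<and> s < n + 1 \<and> P s}"
        by (auto simp: le_Suc_eq less_Suc_eq)
      then show ?thesis using Suc by (simp add: W_def L_def)
    next
      case True
      then have rounds: "{t. 1 \<le> t \<and> t \<le> Suc n \<and> P t} = insert (Suc n) {t. 1 \<le> t \<and> t \<le> n \<and> P t}"
        and past: "{s. 1 \<le> s \<and> s < Suc n + 1 \<and> P s} = insert (Suc n) {s. 1 \<le> s \<and> s < n + 1 \<and> P s}"
        by (auto simp: le_Suc_eq less_Suc_eq)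
      have "W (Suc n + 1) = (\<Sum>j=0..J. exp (- \<eta> * (L (Suc n) j + (y (Suc n) - p (Suc n) j)\<^sup>2)))"
        unfolding W_def L_def past using fin by (simp add: algebra_simps)
      then have "(y (Suc n) - yh (Suc n))\<^sup>2 \<le> (ln (W (Suc n)) - ln (W (Suc n + 1))) / \<eta>"
        unfolding yh_def W_def
        using ewa_square_loss_round[OF \<eta> r, of "{0..J}" "y (Suc n)" "p (Suc n)" "L (Suc n)"]
          p[of "Suc n"] Suc.prems True by simp
      then show ?thesis
        using Suc fin unfolding rounds by (simp add: diff_divide_distrib)
    qed
  qed
  then have regret: "(\<Sum>t\<in>{t. 1 \<le> t \<and> t \<le> T \<and> P t}. (y t - yh t)\<^sup>2)
      \<le> (ln (W 1) - ln (W (T+1))) / \<eta>"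
    by simp
  have "{s. 1 \<le> s \<and> s < (1::nat) \<and> P s} = {}" by auto
  then have "W 1 = real J + 1" unfolding W_def L_def by (simp only:) simp
  moreover have "exp (- \<eta> * L (T+1) j0) \<le> W (T+1)"
    unfolding W_def using j0 by (intro member_le_sum) auto
  then have "- \<eta> * L (T+1) j0 \<le> ln (W (T+1))" using W_pos by (metis exp_gt_zero ln_exp ln_mono)
  ultimately have "(ln (W 1) - ln (W (T+1))) / \<eta> \<le> (ln (real J + 1) + \<eta> * L (T+1) j0) / \<eta>"
    using \<eta> by (intro divide_right_mono) auto
  also have "\<dots> = L (T+1) j0 + ln (real J + 1) / \<eta>" using \<eta> by (simp add: field_simps)
  finally show ?thesis using regret by linarith
qed

section \<open>Dyadic subintervals\<close>

text \<open>\<open>dyadic_index \<gamma> a m z\<close> is the \<open>n\<close> with \<open>z \<in> I\<^sub>a\<^sup>(\<^sup>m\<^sup>,\<^sup>n\<^sup>)\<close>; the right end point of \<open>I\<^sub>a\<close>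
  (coordinate \<open>2\<^sup>m\<close>) belongs to the last subinterval.\<close>

definition dyadic_coord :: "real \<Rightarrow> nat \<Rightarrow> nat \<Rightarrow> real \<Rightarrow> real" where
  "dyadic_coord \<gamma> a m z = (z - (real a - 1) * \<gamma>) * 2 ^ m / \<gamma>"

definition dyadic_index :: "real \<Rightarrow> nat \<Rightarrow> nat \<Rightarrow> real \<Rightarrow> nat" where
  "dyadic_index \<gamma> a m z =
     (if dyadic_coord \<gamma> a m z \<ge> 2 ^ m then 2 ^ m else nat \<lfloor>dyadic_coord \<gamma> a m z\<rfloor> + 1)"

lemma dc_I_bounds:
  assumes "z \<in> dc_I \<gamma> a"
  shows "(real a - 1) * \<gamma> \<le> z" "z \<le> real a * \<gamma>" "z = real a * \<gamma> \<Longrightarrow> real a * \<gamma> = 1"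
  using assms by (auto simp: dc_I_def split: if_splits)

lemma dc_I_subset_unit:
  assumes \<gamma>: "\<gamma> > 0" and N: "real N * \<gamma> = 1" and a: "1 \<le> a" "a \<le> N" and z: "z \<in> dc_I \<gamma> a"
  shows "z \<in> {0..1}"
proof -
  have "0 \<le> (real a - 1) * \<gamma>" "real a * \<gamma> \<le> real N * \<gamma>" using a \<gamma> by (auto intro: mult_right_mono)
  then show ?thesis using dc_I_bounds[OF z] N by auto
qed

lemma dyadic_coord_eq:
  assumes "\<gamma> > 0" shows "z = (real a - 1) * \<gamma> + dyadic_coord \<gamma> a m z * \<gamma> / 2 ^ m"
  using assms by (simp add: dyadic_coord_def)

lemma dyadic_coord_bounds:
  assumes \<gamma>: "\<gamma> > 0" and z: "z \<in> dc_I \<gamma> a"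
  shows "0 \<le> dyadic_coord \<gamma> a m z" "dyadic_coord \<gamma> a m z \<le> 2 ^ m"
    "dyadic_coord \<gamma> a m z = 2 ^ m \<Longrightarrow> real a * \<gamma> = 1"
proof -
  have b: "(real a - 1) * \<gamma> \<le> z" "z \<le> real a * \<gamma>" using dc_I_bounds[OF z] by auto
  show "0 \<le> dyadic_coord \<gamma> a m z" using b \<gamma> unfolding dyadic_coord_def by (intro divide_nonneg_pos) auto
  have "(z - (real a - 1) * \<gamma>) \<le> \<gamma>" using b by (simp add: algebra_simps)
  then have "(z - (real a - 1) * \<gamma>) * 2 ^ m \<le> \<gamma> * 2 ^ m" by (intro mult_right_mono) auto
  then show "dyadic_coord \<gamma> a m z \<le> 2 ^ m" using \<gamma> unfolding dyadic_coord_def by (simp add: divide_le_eq mult.commute)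
  assume "dyadic_coord \<gamma> a m z = 2 ^ m"
  then have "(z - (real a - 1) * \<gamma>) * 2 ^ m = 2 ^ m * \<gamma>" using \<gamma> unfolding dyadic_coord_def by (simp add: divide_eq_eq)
  then have "z - (real a - 1) * \<gamma> = \<gamma>" by (simp add: mult.commute)
  then have "z = real a * \<gamma>" by (simp add: algebra_simps)
  then show "real a * \<gamma> = 1" using dc_I_bounds(3)[OF z] by simp
qed

lemma mem_dc_sub_iff_coord:
  fixes m n :: nat
  assumes \<gamma>: "\<gamma> > 0" and z: "z \<in> dc_I \<gamma> a"
  defines "r \<equiv> dyadic_coord \<gamma> a m z"
  shows "z \<in> dc_sub \<gamma> a m n \<longleftrightarrow> real n - 1 \<le> r \<and> (if n = 2^m then r \<le> real n else r < real n)"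
proof -
  have zr: "z = (real a - 1) * \<gamma> + r * \<gamma> / 2 ^ m" using dyadic_coord_eq[OF \<gamma>] by (simp add: r_def)
  have "(real a - 1) * \<gamma> + (real n - 1) * \<gamma> / 2 ^ m \<le> z \<longleftrightarrow> real n - 1 \<le> r"
    "z < (real a - 1) * \<gamma> + real n * \<gamma> / 2 ^ m \<longleftrightarrow> r < real n"
    "z \<le> (real a - 1) * \<gamma> + real n * \<gamma> / 2 ^ m \<longleftrightarrow> r \<le> real n"
    unfolding zr using \<gamma> by (simp_all add: divide_le_cancel divide_less_cancel)
  then show ?thesis unfolding dc_sub_def Let_def using z by auto
qed

lemma mem_dc_sub_iff:
  assumes \<gamma>: "\<gamma> > 0" and z: "z \<in> dc_I \<gamma> a" and n: "1 \<le> n" "n \<le> 2 ^ m"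
  shows "z \<in> dc_sub \<gamma> a m n \<longleftrightarrow> n = dyadic_index \<gamma> a m z"
proof -
  define r where "r = dyadic_coord \<gamma> a m z"
  have r0: "0 \<le> r" "r \<le> 2^m" using dyadic_coord_bounds[OF \<gamma> z] by (auto simp: r_def)
  have mem: "z \<in> dc_sub \<gamma> a m n \<longleftrightarrow> real n - 1 \<le> r \<and> (if n = 2^m then r \<le> real n else r < real n)"
    unfolding r_def by (rule mem_dc_sub_iff_coord[OF \<gamma> z])
  have idxr: "dyadic_index \<gamma> a m z = (if r \<ge> 2 ^ m then 2 ^ m else nat \<lfloor>r\<rfloor> + 1)"
    by (simp add: dyadic_index_def r_def)
  show ?thesis
  proof
    assume A: "z \<in> dc_sub \<gamma> a m n"
    show "n = dyadic_index \<gamma> a m z"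
    proof (cases "r \<ge> 2^m")
      case True
      then have "r = 2^m" using r0 by simp
      have "n = 2^m"
      proof (rule ccontr)
        assume "n \<noteq> 2^m"
        then have "r < real n" using A mem by auto
        moreover have "real n \<le> 2^m" using n(2) by (metis of_nat_le_iff of_nat_numeral of_nat_power)
        ultimately show False using \<open>r = 2^m\<close> by simp
      qed
      then show ?thesis using idxr True by simp
    next
      case False
      have "\<lfloor>r\<rfloor> = int n - 1" using A mem n False by (auto simp: floor_eq_iff split: if_splits)
      then show ?thesis using idxr False n by simp
    qed
  next
    assume B: "n = dyadic_index \<gamma> a m z"
    show "z \<in> dc_sub \<gamma> a m n"
    proof (cases "r \<ge> 2^m")
      case True
      then have "n = 2^m" "r = 2^m" using B idxr r0 by auto
      then show ?thesis using mem by simp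
    next
      case False
      then have nn: "n = nat \<lfloor>r\<rfloor> + 1" using B idxr by simp
      have rn: "real n = real_of_int \<lfloor>r\<rfloor> + 1" using nn r0 by (simp add: of_nat_nat)
      have "real n - 1 \<le> r" "r < real n" using rn real_of_int_floor_add_one_gt[of r] of_int_floor_le[of r] by linarith+
      then show ?thesis using mem by auto
    qed
  qed
qed

lemma dyadic_index_range:
  assumes \<gamma>: "\<gamma> > 0" and z: "z \<in> dc_I \<gamma> a"
  shows "1 \<le> dyadic_index \<gamma> a m z" "dyadic_index \<gamma> a m z \<le> 2 ^ m"
proof -
  define r where "r = dyadic_coord \<gamma> a m z"
  have r0: "0 \<le> r" "r \<le> 2^m" using dyadic_coord_bounds[OF \<gamma> z] by (auto simp: r_def)
  show "1 \<le> dyadic_index \<gamma> a m z" by (simp add: dyadic_index_def)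
  show "dyadic_index \<gamma> a m z \<le> 2 ^ m"
  proof (cases "r \<ge> 2^m")
    case True then show ?thesis by (simp add: dyadic_index_def r_def)
  next
    case False
    have "real_of_int \<lfloor>r\<rfloor> \<le> r" by simp
    then have "real_of_int \<lfloor>r\<rfloor> < 2^m" using False by linarith
    then have "\<lfloor>r\<rfloor> < 2^m" by (metis of_int_less_iff of_int_numeral of_int_power)
    moreover have "int (nat \<lfloor>r\<rfloor>) = \<lfloor>r\<rfloor>" using r0 by simp
    ultimately have "int (nat \<lfloor>r\<rfloor>) < int (2^m)" by simp
    then have "nat \<lfloor>r\<rfloor> < 2^m" by (simp only: of_nat_less_iff)
    moreover have "dyadic_index \<gamma> a m z = nat \<lfloor>r\<rfloor> + 1" using False by (simp add: dyadic_index_def r_def)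
    ultimately show ?thesis by linarith
  qed
qed

lemma dyadic_index_parent:
  assumes \<gamma>: "\<gamma> > 0" and z: "z \<in> dc_I \<gamma> a" and m: "m \<ge> 1"
  shows "dyadic_index \<gamma> a (m - 1) z = (dyadic_index \<gamma> a m z + 1) div 2"
proof -
  obtain k where k: "m = Suc k" using m by (cases m) auto
  define r where "r = dyadic_coord \<gamma> a (Suc k) z"
  have r0: "0 \<le> r" "r \<le> 2^Suc k" using dyadic_coord_bounds[OF \<gamma> z, of "Suc k"] by (auto simp: r_def)
  have rk: "dyadic_coord \<gamma> a k z = r / 2" unfolding r_def dyadic_coord_def by simp
  show ?thesis
  proof (cases "r \<ge> 2 ^ Suc k")
    case True
    then have "dyadic_coord \<gamma> a k z \<ge> 2 ^ k" using rk by simp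
    then show ?thesis using True k by (simp add: dyadic_index_def r_def)
  next
    case False
    then have "dyadic_coord \<gamma> a k z < 2 ^ k" using rk by simp
    then have i1: "dyadic_index \<gamma> a k z = nat \<lfloor>r / 2\<rfloor> + 1" unfolding dyadic_index_def rk by simp
    have i2: "dyadic_index \<gamma> a m z = nat \<lfloor>r\<rfloor> + 1" using False k by (simp add: dyadic_index_def r_def)
    have "\<lfloor>r / 2\<rfloor> = \<lfloor>r\<rfloor> div 2" using floor_divide_real_eq_div[of 2 r] by simp
    then have "nat \<lfloor>r / 2\<rfloor> = nat \<lfloor>r\<rfloor> div 2" using r0 by (simp add: nat_div_distrib)
    then show ?thesis using i1 i2 k by simp
  qed
qed

lemma dyadic_index_0: "dyadic_index \<gamma> a 0 z = 1"
  by (simp add: dyadic_index_def)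

lemma dc_blocks_eq_Sigma: "dc_blocks M = Sigma {1..M} (\<lambda>m. {1..2^m})"
  by (auto simp: dc_blocks_def)

lemma finite_dc_blocks: "finite (dc_blocks M)"
  unfolding dc_blocks_eq_Sigma by simp

lemma sum_dc_blocks_level:
  fixes h :: "nat \<Rightarrow> real"
  shows "(\<Sum>k\<in>dc_blocks M. h (fst k)) = (\<Sum>m=1..M. 2 ^ m * h m)"
proof -
  have "(\<Sum>k\<in>dc_blocks M. h (fst k)) = (\<Sum>m=1..M. \<Sum>n::nat=1..2^m. h m)"
    unfolding dc_blocks_eq_Sigma by (subst sum.Sigma) (auto simp: case_prod_beta)
  then show ?thesis by simp
qed

lemma sum_dc_blocks_indicator:
  fixes h :: "nat \<Rightarrow> nat \<Rightarrow> real"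
  assumes \<gamma>: "\<gamma> > 0" and z: "z \<in> dc_I \<gamma> a"
  shows "(\<Sum>(m, n)\<in>dc_blocks M. h m n * indicator (dc_sub \<gamma> a m n) z)
           = (\<Sum>m=1..M. h m (dyadic_index \<gamma> a m z))"
proof -
  have "(\<Sum>(m, n)\<in>dc_blocks M. h m n * indicator (dc_sub \<gamma> a m n) z)
      = (\<Sum>m=1..M. \<Sum>n=1..2^m. h m n * indicator (dc_sub \<gamma> a m n) z)"
    unfolding dc_blocks_eq_Sigma by (subst sum.Sigma) auto
  also have "\<dots> = (\<Sum>m=1..M. h m (dyadic_index \<gamma> a m z))"
  proof (rule sum.cong[OF refl])
    fix m
    have "(\<Sum>n=1..2^m. h m n * indicator (dc_sub \<gamma> a m n) z)
        = (\<Sum>n=1..2^m. if n = dyadic_index \<gamma> a m z then h m n else 0)"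
      by (rule sum.cong[OF refl]) (use mem_dc_sub_iff[OF \<gamma> z] in \<open>auto simp: indicator_def\<close>)
    also have "\<dots> = h m (dyadic_index \<gamma> a m z)"
      using dyadic_index_range[OF \<gamma> z, of m] by (simp add: sum.delta)
    finally show "(\<Sum>n=1..2^m. h m n * indicator (dc_sub \<gamma> a m n) z) = h m (dyadic_index \<gamma> a m z)" .
  qed
  finally show ?thesis .
qed

lemma dc_I_unique:
  assumes \<gamma>: "\<gamma> > 0" and N: "real N * \<gamma> = 1"
    and a: "1 \<le> a" "a \<le> N" and a': "1 \<le> a'" "a' \<le> N"
    and z: "z \<in> dc_I \<gamma> a" "z \<in> dc_I \<gamma> a'"
  shows "a = a'"
proof (rule ccontr)
  assume ne: "a \<noteq> a'"
  have gen: False if lt: "b < b'" "b' \<le> N" "z \<in> dc_I \<gamma> b" "z \<in> dc_I \<gamma> b'" for b b'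
  proof -
    have "real b * \<gamma> < real N * \<gamma>" using lt \<gamma> by (intro mult_strict_right_mono) auto
    then have ne1: "real b * \<gamma> \<noteq> 1" using N by linarith
    have Ib: "dc_I \<gamma> b = {(real b - 1) * \<gamma> ..< real b * \<gamma>}" using ne1 by (simp add: dc_I_def)
    have A: "z < real b * \<gamma>" using lt(3) unfolding Ib by simp
    have Bq: "(real b' - 1) * \<gamma> \<le> z" using dc_I_bounds(1)[OF lt(4)] .
    have "real b \<le> real b' - 1" using lt(1) by linarith
    then have C: "real b * \<gamma> \<le> (real b' - 1) * \<gamma>" using \<gamma> by (intro mult_right_mono) auto
    show False using A Bq C by linarith
  qed
  show False
  proof (cases "a < a'")
    case True then show ?thesis using gen[OF True a'(2) z] by simp
  next
    case False then have "a' < a" using ne by simp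
    then show ?thesis using gen[OF _ a(2) z(2) z(1)] by simp
  qed
qed

lemma dc_I_cover:
  assumes \<gamma>: "\<gamma> > 0" and N: "real N * \<gamma> = 1" and z: "z \<in> {0..1}"
  shows "\<exists>a\<in>{1..N}. z \<in> dc_I \<gamma> a"
proof -
  have Npos: "real N > 0" using N \<gamma> by (cases N) auto
  have N1: "N \<ge> 1" using Npos by simp
  have Ng: "\<gamma> = 1 / real N" using N Npos by (simp add: eq_divide_eq mult.commute)
  show ?thesis
  proof (cases "z = 1")
    case True
    have IN: "dc_I \<gamma> N = {(real N - 1) * \<gamma> .. real N * \<gamma>}" using N by (simp add: dc_I_def)
    have "(real N - 1) * \<gamma> \<le> 1" using N \<gamma> by (simp add: algebra_simps)
    then have "z \<in> dc_I \<gamma> N" unfolding IN using True N by simp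
    then show ?thesis using N1 by auto
  next
    case False
    then have z1: "z < 1" using z by simp
    define k where "k = \<lfloor>z * real N\<rfloor>"
    have k0: "0 \<le> k" using z Npos by (simp add: k_def)
    have kl1: "real_of_int k \<le> z * real N" unfolding k_def by (rule of_int_floor_le)
    have kl2: "z * real N < real_of_int k + 1" unfolding k_def by (rule real_of_int_floor_add_one_gt)
    have "z * real N < 1 * real N" by (rule mult_strict_right_mono[OF z1 Npos])
    then have kN: "k < int N" using kl1 by linarith
    define a where "a = nat k + 1"
    have ar: "real a = real_of_int k + 1" using k0 by (simp add: a_def)
    have lo: "(real a - 1) * \<gamma> \<le> z"
    proof -
      have "real_of_int k / real N \<le> z" using kl1 Npos by (simp add: pos_divide_le_eq)
      then show ?thesis unfolding ar Ng by simp
    qed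
    have hi: "z < real a * \<gamma>"
    proof -
      have "z < (real_of_int k + 1) / real N" using kl2 Npos by (simp add: pos_less_divide_eq)
      then show ?thesis unfolding ar Ng by simp
    qed
    have "z \<in> dc_I \<gamma> a" using lo hi by (auto simp: dc_I_def)
    moreover have "a \<in> {1..N}" using kN k0 by (auto simp: a_def)
    ultimately show ?thesis by blast
  qed
qed

definition dyadic_coef :: "real \<Rightarrow> nat \<Rightarrow> nat \<Rightarrow> real" where
  "dyadic_coef \<gamma> m i = (if i = 1 then - \<gamma> / 2 ^ (m - 1) else \<gamma> / 2 ^ (m - 1))"

lemma dc_f_eq_sum_coef:
  "dc_f B \<gamma> M a j u z = - B + real j * \<gamma> +
     (\<Sum>k\<in>dc_blocks M. (dyadic_coef \<gamma> (fst k) 1 * u k 1 + dyadic_coef \<gamma> (fst k) 2 * u k 2)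
                         * indicator (dc_sub \<gamma> a (fst k) (snd k)) z)"
  unfolding dc_f_def dyadic_coef_def by (simp add: case_prod_beta mult.commute)

lemma dc_f_diff:
  "dc_f B \<gamma> M a j u z - dc_f B \<gamma> M a j v z =
   (\<Sum>k\<in>dc_blocks M. (dyadic_coef \<gamma> (fst k) 1 * (u k 1 - v k 1) + dyadic_coef \<gamma> (fst k) 2 * (u k 2 - v k 2))
                       * indicator (dc_sub \<gamma> a (fst k) (snd k)) z)"
  unfolding dc_f_eq_sum_coef by (simp add: sum_subtractf[symmetric] algebra_simps)

lemma dc_f_fun_upd:
  assumes k: "k \<in> dc_blocks M" and i: "i \<in> {1,2}"
  shows "dc_f B \<gamma> M a j (u(k := (u k)(i := v))) z
           = dc_f B \<gamma> M a j u z + (v - u k i) * dyadic_coef \<gamma> (fst k) i * indicator (dc_sub \<gamma> a (fst k) (snd k)) z"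
proof -
  have "dc_f B \<gamma> M a j (u(k := (u k)(i := v))) z - dc_f B \<gamma> M a j u z
      = (\<Sum>k'\<in>dc_blocks M. if k' = k then (v - u k i) * dyadic_coef \<gamma> (fst k) i
                                          * indicator (dc_sub \<gamma> a (fst k) (snd k)) z else 0)"
    unfolding dc_f_diff using i by (intro sum.cong) (auto simp: algebra_simps)
  also have "\<dots> = (v - u k i) * dyadic_coef \<gamma> (fst k) i * indicator (dc_sub \<gamma> a (fst k) (snd k)) z"
    using k finite_dc_blocks by (simp add: sum.delta')
  finally show ?thesis by simp
qed

lemma dc_f_path:
  assumes "\<gamma> > 0" and "z \<in> dc_I \<gamma> a"
  shows "dc_f B \<gamma> M a j u z = - B + real j * \<gamma> +
    (\<Sum>m=1..M. u (m, dyadic_index \<gamma> a m z) 1 * (- \<gamma> / 2 ^ (m - 1))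
                + u (m, dyadic_index \<gamma> a m z) 2 * (\<gamma> / 2 ^ (m - 1)))"
  unfolding dc_f_def
  using sum_dc_blocks_indicator[OF assms, where M=M
      and h="\<lambda>m n. u (m, n) 1 * (- \<gamma> / 2 ^ (m - 1)) + u (m, n) 2 * (\<gamma> / 2 ^ (m - 1))"]
  by simp

lemma sum_inverse_powers_of_two: "(\<Sum>m=1..M. (1::real) / 2 ^ (m - 1)) = 2 - 2 / 2 ^ M"
  by (induction M) (simp_all add: field_simps)

lemma dc_f_bound:
  assumes \<gamma>: "\<gamma> > 0" and z: "z \<in> dc_I \<gamma> a" and u: "u \<in> simplex_prod (dc_blocks M) (\<lambda>_. 2)"
  shows "\<bar>dc_f B \<gamma> M a j u z - (- B + real j * \<gamma>)\<bar> \<le> 2 * \<gamma>"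
proof -
  have "\<bar>u (m, n) 1 * (- \<gamma> / 2 ^ (m - 1)) + u (m, n) 2 * (\<gamma> / 2 ^ (m - 1))\<bar> \<le> \<gamma> * (1 / 2 ^ (m - 1))"
    if "(m, n) \<in> dc_blocks M" for m n
  proof -
    have "0 \<le> u (m, n) 1" "0 \<le> u (m, n) 2" "u (m, n) 1 + u (m, n) 2 = 1"
      using u that by (auto simp: simplex_prod_two_iff)
    then have "\<bar>u (m, n) 2 - u (m, n) 1\<bar> * (\<gamma> / 2 ^ (m - 1)) \<le> 1 * (\<gamma> / 2 ^ (m - 1))"
      using \<gamma> by (intro mult_right_mono) auto
    moreover have "u (m, n) 1 * (- \<gamma> / 2 ^ (m - 1)) + u (m, n) 2 * (\<gamma> / 2 ^ (m - 1))
        = (u (m, n) 2 - u (m, n) 1) * (\<gamma> / 2 ^ (m - 1))"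
      by (simp add: algebra_simps)
    ultimately show ?thesis using \<gamma> by (simp add: abs_mult)
  qed
  moreover have "(m, dyadic_index \<gamma> a m z) \<in> dc_blocks M" if "m \<in> {1..M}" for m
    using that dyadic_index_range[OF \<gamma> z, of m] by (auto simp: dc_blocks_def)
  ultimately have "\<bar>\<Sum>m=1..M. u (m, dyadic_index \<gamma> a m z) 1 * (- \<gamma> / 2 ^ (m - 1))
                    + u (m, dyadic_index \<gamma> a m z) 2 * (\<gamma> / 2 ^ (m - 1))\<bar>
      \<le> (\<Sum>m=1..M. \<gamma> * (1 / 2 ^ (m - 1)))"
    by (intro order_trans[OF sum_abs] sum_mono) auto
  also have "\<dots> = \<gamma> * (2 - 2 / 2 ^ M)"
    by (simp only: sum_distrib_left[symmetric] sum_inverse_powers_of_two)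
  also have "\<dots> \<le> 2 * \<gamma>" using \<gamma> by (simp add: algebra_simps)
  finally show ?thesis using dc_f_path[OF \<gamma> z] by simp
qed

lemma abs_sub_dc_f_le:
  assumes \<gamma>: "\<gamma> > 0" "\<gamma> \<le> B" and z: "z \<in> dc_I \<gamma> a"
    and u: "u \<in> simplex_prod (dc_blocks M) (\<lambda>_. 2)"
    and j: "real j * \<gamma> \<le> 2 * B" and y: "\<bar>y\<bar> \<le> B"
  shows "\<bar>y - dc_f B \<gamma> M a j u z\<bar> \<le> 4 * B"
proof -
  have "0 \<le> real j * \<gamma>" using \<gamma> by simp
  then show ?thesis using dc_f_bound[OF \<gamma>(1) z u, of B j] \<gamma> j y unfolding abs_le_iff by linarith
qed

lemma partial_dc_loss:
  assumes k: "k \<in> dc_blocks M" and i: "i \<in> {1,2}"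
  shows "partial_coord (dc_loss B \<gamma> M a j x y t) k i u =
     - 2 * (y t - dc_f B \<gamma> M a j u (x t)) * dyadic_coef \<gamma> (fst k) i
       * indicator (dc_sub \<gamma> a (fst k) (snd k)) (x t)"
proof -
  define d where "d = dyadic_coef \<gamma> (fst k) i * indicator (dc_sub \<gamma> a (fst k) (snd k)) (x t)"
  define F where "F = dc_f B \<gamma> M a j u (x t)"
  have eq: "(\<lambda>v. dc_loss B \<gamma> M a j x y t (u(k := (u k)(i := v)))) = (\<lambda>v. (y t - (F + (v - u k i) * d))\<^sup>2)"
    unfolding dc_loss_def dc_f_fun_upd[OF k i] F_def d_def by (simp add: mult.assoc)
  have "((\<lambda>v. (y t - (F + (v - u k i) * d))\<^sup>2) has_real_derivative
      2 * (y t - (F + (u k i - u k i) * d)) * (- d)) (at (u k i))"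
    by (intro derivative_eq_intros) auto
  then show ?thesis unfolding partial_coord_def eq F_def d_def by (simp add: DERIV_imp_deriv algebra_simps)
qed

text \<open>The loss is the square of an affine function of the weights, so it is convex: its increment
  is bounded by the linear term.\<close>

lemma dc_loss_diff_le_gradient:
  "dc_loss B \<gamma> M a j x y t u - dc_loss B \<gamma> M a j x y t v
     \<le> (\<Sum>k\<in>dc_blocks M. partial_coord (dc_loss B \<gamma> M a j x y t) k 1 u * (u k 1 - v k 1)
                         + partial_coord (dc_loss B \<gamma> M a j x y t) k 2 u * (u k 2 - v k 2))"
proof -
  define F where "F = dc_f B \<gamma> M a j u (x t)"
  define F' where "F' = dc_f B \<gamma> M a j v (x t)"
  have "(\<Sum>k\<in>dc_blocks M. partial_coord (dc_loss B \<gamma> M a j x y t) k 1 u * (u k 1 - v k 1)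
                         + partial_coord (dc_loss B \<gamma> M a j x y t) k 2 u * (u k 2 - v k 2))
      = - 2 * (y t - F) * (F - F')"
    unfolding F_def F'_def dc_f_diff sum_distrib_left
    by (intro sum.cong) (simp_all add: partial_dc_loss algebra_simps)
  moreover have "(y t - F)\<^sup>2 - (y t - F')\<^sup>2 \<le> - 2 * (y t - F) * (F - F')"
    using zero_le_power2[of "F - F'"] by (simp add: power2_eq_square algebra_simps)
  ultimately show ?thesis by (simp add: dc_loss_def F_def F'_def)
qed

lemma abs_partial_dc_loss_le:
  assumes k: "k \<in> dc_blocks M" and i: "i \<in> {1,2}" and \<gamma>: "\<gamma> > 0"
  shows "\<bar>partial_coord (dc_loss B \<gamma> M a j x y t) k i u\<bar>
           \<le> 4 * \<bar>y t - dc_f B \<gamma> M a j u (x t)\<bar> * \<gamma> / 2 ^ fst k"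
proof -
  have "fst k \<ge> 1" using k by (auto simp: dc_blocks_def)
  then have "\<bar>dyadic_coef \<gamma> (fst k) i\<bar> = 2 * \<gamma> / 2 ^ fst k"
    using \<gamma> by (cases "fst k") (auto simp: dyadic_coef_def)
  moreover have "\<bar>indicator (dc_sub \<gamma> a (fst k) (snd k)) (x t) :: real\<bar> \<le> 1"
    by (simp add: indicator_def)
  ultimately have "\<bar>partial_coord (dc_loss B \<gamma> M a j x y t) k i u\<bar>
      \<le> 2 * \<bar>y t - dc_f B \<gamma> M a j u (x t)\<bar> * (2 * \<gamma> / 2 ^ fst k) * 1"
    unfolding partial_dc_loss[OF k i] abs_mult using \<gamma> by (intro mult_mono) auto
  then show ?thesis by simp
qed

lemma dc_u_mem: "dc_u B \<gamma> M a j x y t \<in> simplex_prod (dc_blocks M) (\<lambda>_. 2)"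
  unfolding dc_u_def by (rule ameg_out_two_mem)

lemma dc_instance_regret:
  fixes us :: "nat \<times> nat \<Rightarrow> nat \<Rightarrow> real"
  assumes \<gamma>: "\<gamma> > 0" "\<gamma> \<le> B" and j: "real j * \<gamma> \<le> 2 * B"
    and y: "\<And>t. t \<in> dc_rounds \<gamma> a x \<Longrightarrow> t \<le> T \<Longrightarrow> \<bar>y t\<bar> \<le> B"
    and us: "us \<in> simplex_prod (dc_blocks M) (\<lambda>_. 2)"
  defines "Ra \<equiv> {t\<in>dc_rounds \<gamma> a x. t \<le> T}"
  shows "(\<Sum>t\<in>Ra. dc_loss B \<gamma> M a j x y t (dc_u B \<gamma> M a j x y t) - dc_loss B \<gamma> M a j x y t us)
           \<le> 48 * B * \<gamma> * real M * sqrt (1 + real (card Ra))"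
proof -
  define G :: "nat \<times> nat \<Rightarrow> real" where "G = (\<lambda>(m, n). 16 * B * \<gamma> / 2 ^ m)"
  define L where "L = dc_loss B \<gamma> M a j x y"
  define u where "u = dc_u B \<gamma> M a j x y"
  define g where "g k t i = partial_coord (L t) k i (u t)" for k t i
  have u_eq: "u = ameg_out (dc_blocks M) (\<lambda>_. 2) G L (dc_rounds \<gamma> a x)"
    by (simp add: u_def dc_u_def G_def L_def fun_eq_iff)
  have G_pos: "G k > 0" for k using \<gamma> by (simp add: G_def case_prod_beta)
  have g_bound: "\<bar>g k t i\<bar> \<le> G k"
    if k: "k \<in> dc_blocks M" and t: "t \<in> dc_rounds \<gamma> a x" "t \<le> T" and i: "i \<in> {1,2}" for k t i
  proof -
    have "\<bar>y t - dc_f B \<gamma> M a j (u t) (x t)\<bar> \<le> 4 * B"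
      using abs_sub_dc_f_le[OF \<gamma> _ dc_u_mem j y[OF t]] t by (simp add: u_def dc_rounds_def)
    then have "4 * \<bar>y t - dc_f B \<gamma> M a j (u t) (x t)\<bar> * \<gamma> / 2 ^ fst k \<le> 4 * (4 * B) * \<gamma> / 2 ^ fst k"
      using \<gamma> by (intro divide_right_mono mult_right_mono) auto
    then show ?thesis
      using abs_partial_dc_loss_le[OF k i \<gamma>(1), of B a j x y t "u t"]
      unfolding g_def L_def G_def case_prod_beta by simp
  qed
  have "(\<Sum>t\<in>Ra. L t (u t) - L t us)
      \<le> (\<Sum>t\<in>Ra. \<Sum>k\<in>dc_blocks M. g k t 1 * (u t k 1 - us k 1) + g k t 2 * (u t k 2 - us k 2))"
    unfolding g_def L_def by (intro sum_mono dc_loss_diff_le_gradient)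
  also have "\<dots> = (\<Sum>k\<in>dc_blocks M. \<Sum>t\<in>Ra. g k t 1 * (u t k 1 - us k 1) + g k t 2 * (u t k 2 - us k 2))"
    by (rule sum.swap)
  also have "\<dots> \<le> (\<Sum>k\<in>dc_blocks M. 3 * G k * sqrt (1 + real (card Ra)))"
  proof (rule sum_mono)
    fix k assume k: "k \<in> dc_blocks M"
    have us_k: "us k 1 \<ge> 0" "us k 2 \<ge> 0" "us k 1 + us k 2 = 1"
      using k us by (auto simp: simplex_prod_two_iff)
    show "(\<Sum>t\<in>Ra. g k t 1 * (u t k 1 - us k 1) + g k t 2 * (u t k 2 - us k 2))
        \<le> 3 * G k * sqrt (1 + real (card Ra))"
      unfolding Ra_def g_def u_eq
      by (rule ameg_two_block_regret[where G=G and us=us, OF k G_pos _ us_k])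
        (use g_bound[OF k] in \<open>auto simp: g_def u_eq\<close>)
  qed
  also have "\<dots> = (\<Sum>m=1..M. 2 ^ m * (3 * (16 * B * \<gamma> / 2 ^ m) * sqrt (1 + real (card Ra))))"
    using sum_dc_blocks_level[of "\<lambda>m. 3 * (16 * B * \<gamma> / 2 ^ m) * sqrt (1 + real (card Ra))"]
    by (simp only: G_def case_prod_beta)
  also have "\<dots> = (\<Sum>m=1..M. 48 * B * \<gamma> * sqrt (1 + real (card Ra)))"
    by (intro sum.cong) auto
  also have "\<dots> = 48 * B * \<gamma> * real M * sqrt (1 + real (card Ra))" by simp
  finally show ?thesis unfolding L_def u_def .
qed

section \<open>The chaining comparator\<close>

lemma lip1_classD:
  assumes "f \<in> lip1_class B" "z \<in> {0..1}"
  shows "\<bar>f z\<bar> \<le> B" "w \<in> {0..1} \<Longrightarrow> \<bar>f z - f w\<bar> \<le> \<bar>z - w\<bar>"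
proof -
  have "f z \<in> {-B..B}" using assms unfolding lip1_class_def by blast
  then show "\<bar>f z\<bar> \<le> B" by auto
  show "w \<in> {0..1} \<Longrightarrow> \<bar>f z - f w\<bar> \<le> \<bar>z - w\<bar>" using assms by (simp add: lip1_class_def)
qed

lemma two_point_weights:
  fixes r \<delta> :: real
  assumes "r > 0" "\<bar>\<delta>\<bar> \<le> r"
  shows "0 \<le> (1 - \<delta> / r) / 2" "0 \<le> (1 + \<delta> / r) / 2" "(1 - \<delta> / r) / 2 + (1 + \<delta> / r) / 2 = 1"
    "(1 - \<delta> / r) / 2 * (- r) + (1 + \<delta> / r) / 2 * r = \<delta>"
proof -
  have "- 1 \<le> \<delta> / r" "\<delta> / r \<le> 1" using assms by (auto simp: abs_le_iff divide_le_eq le_divide_eq)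
  then show "0 \<le> (1 - \<delta> / r) / 2" "0 \<le> (1 + \<delta> / r) / 2" by (auto simp: abs_le_iff)
  show "(1 - \<delta> / r) / 2 + (1 + \<delta> / r) / 2 = 1" by (simp add: field_simps)
  show "(1 - \<delta> / r) / 2 * (- r) + (1 + \<delta> / r) / 2 * r = \<delta>" using assms by (simp add: field_simps)
qed

text \<open>If the weights of block \<open>(m, n)\<close> encode the increment of \<open>V\<close> from the parent interval to
  \<open>I\<^sub>a\<^sup>(\<^sup>m\<^sup>,\<^sup>n\<^sup>)\<close>, then along the chain of intervals containing \<open>z\<close> the increments telescope.\<close>

lemma dc_f_telescope:
  assumes \<gamma>: "\<gamma> > 0" and z: "z \<in> dc_I \<gamma> a"
    and incr: "\<And>m n. (m, n) \<in> dc_blocks M \<Longrightarrow>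
      u (m, n) 1 * (- \<gamma> / 2 ^ (m - 1)) + u (m, n) 2 * (\<gamma> / 2 ^ (m - 1)) = V m n - V (m - 1) ((n + 1) div 2)"
    and base: "V 0 1 = - B + real j * \<gamma>"
  shows "dc_f B \<gamma> M a j u z = V M (dyadic_index \<gamma> a M z)"
proof -
  define F where "F m = V m (dyadic_index \<gamma> a m z)" for m
  have "u (m, dyadic_index \<gamma> a m z) 1 * (- \<gamma> / 2 ^ (m - 1))
          + u (m, dyadic_index \<gamma> a m z) 2 * (\<gamma> / 2 ^ (m - 1)) = F m - F (m - 1)"
    if "m \<in> {1..M}" for m
    using that incr[of m "dyadic_index \<gamma> a m z"] dyadic_index_range[OF \<gamma> z, of m]
      dyadic_index_parent[OF \<gamma> z, of m]
    by (simp add: F_def dc_blocks_def)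
  then have "dc_f B \<gamma> M a j u z = - B + real j * \<gamma> + (\<Sum>m=1..M. F m - F (m - 1))"
    unfolding dc_f_path[OF \<gamma> z] by simp
  also have "(\<Sum>m=1..M. F m - F (m - 1)) = F M - F 0" by (induction M) auto
  finally show ?thesis using base by (simp add: F_def dyadic_index_0)
qed

definition dyadic_center :: "real \<Rightarrow> nat \<Rightarrow> nat \<Rightarrow> nat \<Rightarrow> real" where
  "dyadic_center \<gamma> a m n = (real a - 1) * \<gamma> + (real n - 1/2) * \<gamma> / 2 ^ m"

lemma dyadic_center_mem:
  assumes \<gamma>: "\<gamma> > 0" and N: "real N * \<gamma> = 1" and a: "1 \<le> a" "a \<le> N" and n: "1 \<le> n" "n \<le> 2 ^ m"
  shows "dyadic_center \<gamma> a m n \<in> {0..1}"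
proof -
  have "real n \<le> 2 ^ m" using n(2) by (metis of_nat_le_iff of_nat_numeral of_nat_power)
  then have "real n - 1/2 \<le> 2 ^ m" by linarith
  then have "(real n - 1/2) * \<gamma> / 2 ^ m \<le> \<gamma>" using \<gamma> by (simp add: divide_le_eq mult_right_mono)
  moreover have "0 \<le> (real n - 1/2) * \<gamma> / 2 ^ m" "0 \<le> (real a - 1) * \<gamma>" using n a \<gamma> by auto
  moreover have "real a * \<gamma> \<le> real N * \<gamma>" using a \<gamma> by (intro mult_right_mono) auto
  then have "(real a - 1) * \<gamma> + \<gamma> \<le> 1" using N by (simp add: algebra_simps)
  ultimately show ?thesis unfolding dyadic_center_def by auto
qed

lemma dyadic_center_parent_dist:
  assumes "m \<ge> 1" "n \<ge> 1"
  shows "\<bar>dyadic_center \<gamma> a m n - dyadic_center \<gamma> a (m - 1) ((n + 1) div 2)\<bar> = \<bar>\<gamma>\<bar> / 2 ^ (m + 1)"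
proof -
  obtain k where k: "m = Suc k" using assms by (cases m) auto
  consider q where "n = 2 * q" | q where "n = 2 * q + 1" by (metis oddE evenE)
  then show ?thesis
    by cases (simp_all add: k dyadic_center_def field_simps abs_divide abs_mult)
qed

lemma dyadic_center_dist:
  assumes \<gamma>: "\<gamma> > 0" and z: "z \<in> dc_I \<gamma> a"
  shows "\<bar>dyadic_center \<gamma> a M (dyadic_index \<gamma> a M z) - z\<bar> \<le> \<gamma> / 2 ^ (M + 1)"
proof -
  define n where "n = dyadic_index \<gamma> a M z"
  have "1 \<le> n" "n \<le> 2 ^ M" using dyadic_index_range[OF \<gamma> z] by (auto simp: n_def)
  then have "z \<in> dc_sub \<gamma> a M n" using mem_dc_sub_iff[OF \<gamma> z] by (simp add: n_def)
  then have "(real a - 1) * \<gamma> + (real n - 1) * \<gamma> / 2 ^ M \<le> z"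
    "z \<le> (real a - 1) * \<gamma> + real n * \<gamma> / 2 ^ M"
    by (auto simp: dc_sub_def Let_def split: if_splits)
  moreover define lo where "lo = (real a - 1) * \<gamma> + (real n - 1) * \<gamma> / 2 ^ M"
  moreover have "(real a - 1) * \<gamma> + real n * \<gamma> / 2 ^ M = lo + 2 * (\<gamma> / 2 ^ (M + 1))"
    unfolding lo_def by (simp add: field_simps)
  moreover have "dyadic_center \<gamma> a M n = lo + \<gamma> / 2 ^ (M + 1)"
    unfolding dyadic_center_def lo_def by (simp add: field_simps)
  ultimately show ?thesis unfolding n_def[symmetric] abs_le_iff by linarith
qed

lemma grid_point_near:
  fixes B \<gamma> v :: real and J :: nat
  assumes \<gamma>: "\<gamma> > 0" and J: "real J * \<gamma> = 2 * B" and v: "\<bar>v\<bar> \<le> B"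
  obtains j where "j \<le> J" "\<bar>- B + real j * \<gamma> - v\<bar> \<le> \<gamma> / 2"
proof
  define X where "X = (v + B) / \<gamma>"
  have X: "0 \<le> X" "X \<le> real J" using v \<gamma> J unfolding X_def by (auto simp: divide_le_eq abs_le_iff)
  then have "0 \<le> round X" "round X \<le> int J" using round_mono[of 0 X] round_mono[of X "real J"] by auto
  then show "nat (round X) \<le> J" by (simp add: nat_le_iff)
  have "- B + real (nat (round X)) * \<gamma> - v = \<gamma> * (real_of_int (round X) - X)"
    using \<gamma> \<open>0 \<le> round X\<close> by (simp add: X_def field_simps)
  also have "\<bar>\<dots>\<bar> \<le> \<gamma> * (1/2)"
    using of_int_round_abs_le[of X] \<gamma> by (simp add: abs_mult mult_left_mono)
  finally show "\<bar>- B + real (nat (round X)) * \<gamma> - v\<bar> \<le> \<gamma> / 2" by simp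
qed

text \<open>The comparator follows \<open>f\<close> at the centres of the dyadic subintervals: the block \<open>(m, n)\<close>
  stores the increment of \<open>f\<close> from the centre of the parent interval, the start value \<open>-B + j\<gamma>\<close>
  being the grid point next to \<open>f\<close> at the centre of \<open>I\<^sub>a\<close>. Lipschitz continuity bounds the
  increments by \<open>\<gamma> / 2\<^sup>m\<^sup>-\<^sup>1\<close>, so they are representable.\<close>

lemma dc_comparator:
  assumes \<gamma>: "\<gamma> > 0" and N: "real N * \<gamma> = 1" and a: "1 \<le> a" "a \<le> N"
    and J: "real J * \<gamma> = 2 * B" and f: "f \<in> lip1_class B" and M: "M \<ge> 1"
  obtains j us where "j \<le> J" "us \<in> simplex_prod (dc_blocks M) (\<lambda>_. 2)"
    "\<And>z. z \<in> dc_I \<gamma> a \<Longrightarrow> \<bar>dc_f B \<gamma> M a j us z - f z\<bar> \<le> \<gamma> / 2 ^ (M + 1)"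
    "\<And>z. z \<in> dc_I \<gamma> a \<Longrightarrow> \<bar>dc_f B \<gamma> M a j us z\<bar> \<le> B"
proof -
  let ?c = "dyadic_center \<gamma> a"
  have c01: "?c m n \<in> {0..1}" if "1 \<le> n" "n \<le> 2 ^ m" for m n
    using dyadic_center_mem[OF \<gamma> N a that] .
  obtain j where j: "j \<le> J" and base: "\<bar>- B + real j * \<gamma> - f (?c 0 1)\<bar> \<le> \<gamma> / 2"
    using grid_point_near[OF \<gamma> J lip1_classD(1)[OF f c01[of 1 0]]] by auto
  define V where "V m n = (if m = 0 then - B + real j * \<gamma> else f (?c m n))" for m n
  define r where "r m = \<gamma> / 2 ^ (m - 1)" for m :: nat
  define \<delta> where "\<delta> m n = V m n - V (m - 1) ((n + 1) div 2)" for m n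
  have r_pos: "r m > 0" for m using \<gamma> by (simp add: r_def)
  have \<delta>_bound: "\<bar>\<delta> m n\<bar> \<le> r m" if "(m, n) \<in> dc_blocks M" for m n
  proof -
    have mn: "m \<ge> 1" "1 \<le> n" "n \<le> 2 ^ m" using that by (auto simp: dc_blocks_def)
    then have "1 \<le> (n + 1) div 2" "(n + 1) div 2 \<le> 2 ^ (m - 1)"
      by (auto simp: less_eq_div_iff_mult_less_eq) (cases m; simp)
    then have f_step: "\<bar>f (?c m n) - f (?c (m - 1) ((n + 1) div 2))\<bar> \<le> \<gamma> / 2 ^ (m + 1)"
      using lip1_classD(2)[OF f c01[OF mn(2,3)] c01] dyadic_center_parent_dist[OF mn(1,2), of \<gamma> a] \<gamma>
      by (metis abs_of_pos)
    show ?thesis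
    proof (cases "m = 1")
      case True
      then have "(n + 1) div 2 = 1" using mn by auto
      moreover have "\<gamma> / 2 ^ (m + 1) = \<gamma> / 4" using True by simp
      ultimately show ?thesis using f_step base True
        unfolding \<delta>_def V_def r_def abs_le_iff by simp
    next
      case False
      have "\<gamma> / 2 ^ (m + 1) \<le> r m" unfolding r_def using \<gamma> by (intro divide_left_mono power_increasing) auto
      then show ?thesis using f_step False mn(1) by (simp add: \<delta>_def V_def)
    qed
  qed
  define us where "us k (i::nat) = (if i = 1 then (1 - \<delta> (fst k) (snd k) / r (fst k)) / 2
                                      else (1 + \<delta> (fst k) (snd k) / r (fst k)) / 2)" for k i
  have us_mem: "us \<in> simplex_prod (dc_blocks M) (\<lambda>_. 2)"
    unfolding simplex_prod_two_iff
    using two_point_weights(1-3)[OF r_pos \<delta>_bound] by (auto simp: us_def)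
  have dc_f_us: "dc_f B \<gamma> M a j us z = f (?c M (dyadic_index \<gamma> a M z))" if z: "z \<in> dc_I \<gamma> a" for z
  proof -
    have "us (m, n) 1 * (- \<gamma> / 2 ^ (m - 1)) + us (m, n) 2 * (\<gamma> / 2 ^ (m - 1)) = \<delta> m n"
      if "(m, n) \<in> dc_blocks M" for m n
      using two_point_weights(4)[OF r_pos \<delta>_bound[OF that]] by (simp add: us_def r_def)
    then show ?thesis
      using dc_f_telescope[OF \<gamma> z, of M us V] M by (simp add: \<delta>_def V_def)
  qed
  show ?thesis
  proof (rule that[OF j us_mem])
    fix z assume z: "z \<in> dc_I \<gamma> a"
    define n where "n = dyadic_index \<gamma> a M z"
    have c: "?c M n \<in> {0..1}" using c01 dyadic_index_range[OF \<gamma> z] by (simp add: n_def)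
    show "\<bar>dc_f B \<gamma> M a j us z - f z\<bar> \<le> \<gamma> / 2 ^ (M + 1)"
      using lip1_classD(2)[OF f c dc_I_subset_unit[OF \<gamma> N a z]] dyadic_center_dist[OF \<gamma> z, of M]
      unfolding dc_f_us[OF z] n_def by linarith
    show "\<bar>dc_f B \<gamma> M a j us z\<bar> \<le> B"
      using lip1_classD(1)[OF f c] unfolding dc_f_us[OF z] n_def .
  qed
qed

section \<open>Regret on one cell\<close>

lemma dc_aggregation_regret:
  assumes \<gamma>: "\<gamma> > 0" "\<gamma> \<le> B" and J: "real J * \<gamma> = 2 * B" and j: "j \<le> J"
    and y: "\<And>t. t \<in> dc_rounds \<gamma> a x \<Longrightarrow> t \<le> T \<Longrightarrow> \<bar>y t\<bar> \<le> B"
  defines "Ra \<equiv> {t\<in>dc_rounds \<gamma> a x. t \<le> T}"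
  shows "(\<Sum>t\<in>Ra. (y t - dc_fa B \<gamma> M a x y t (x t))\<^sup>2)
           \<le> (\<Sum>t\<in>Ra. (y t - dc_fj B \<gamma> M a j x y t (x t))\<^sup>2) + 32 * B\<^sup>2 * ln (real J + 1)"
proof -
  define \<eta> :: real where "\<eta> = 1 / (32 * B\<^sup>2)"
  define p where "p t i = dc_fj B \<gamma> M a i x y t (x t)" for t i
  have B: "B > 0" using \<gamma> by simp
  have \<eta>: "\<eta> > 0" "2 * \<eta> * (4 * B)\<^sup>2 \<le> 1" using B by (simp_all add: \<eta>_def power2_eq_square)
  have "2 * B / \<gamma> = real J" using J \<gamma> by (simp add: field_simps)
  then have "dc_J B \<gamma> = J" by (simp add: dc_J_def)
  then have fa: "dc_fa B \<gamma> M a x y t (x t)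
      = (\<Sum>i=0..J. exp (- \<eta> * (\<Sum>s\<in>{s. 1 \<le> s \<and> s < t \<and> x s \<in> dc_I \<gamma> a}. (y s - p s i)\<^sup>2))
          / (\<Sum>i'=0..J. exp (- \<eta> * (\<Sum>s\<in>{s. 1 \<le> s \<and> s < t \<and> x s \<in> dc_I \<gamma> a}. (y s - p s i')\<^sup>2)))
          * p t i)" for t
    by (simp add: dc_fa_def dc_w_def dc_cumloss_def p_def \<eta>_def)
  have p_bound: "\<bar>y t - p t i\<bar> \<le> 4 * B"
    if "1 \<le> t" "t \<le> T" "x t \<in> dc_I \<gamma> a" "i \<le> J" for t i
  proof -
    have "real i * \<gamma> \<le> real J * \<gamma>" using that \<gamma> by (intro mult_right_mono) auto
    then show ?thesis
      using abs_sub_dc_f_le[OF \<gamma> _ dc_u_mem] y[of t] that J by (simp add: p_def dc_fj_def dc_rounds_def)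
  qed
  have ln_eq: "ln (real J + 1) / \<eta> = 32 * B\<^sup>2 * ln (real J + 1)" by (simp add: \<eta>_def)
  have "Ra = {t. 1 \<le> t \<and> t \<le> T \<and> x t \<in> dc_I \<gamma> a}" "Ra = {s. 1 \<le> s \<and> s < T + 1 \<and> x s \<in> dc_I \<gamma> a}"
    by (auto simp: Ra_def dc_rounds_def)
  then show ?thesis
    using ewa_square_loss_regret[OF \<eta> j, where P="\<lambda>s. x s \<in> dc_I \<gamma> a" and T=T and y=y and p=p] p_bound
    unfolding fa ln_eq by (simp add: p_def)
qed

lemma square_loss_perturb:
  fixes y p q e B :: real
  assumes "\<bar>p - q\<bar> \<le> e" "\<bar>p\<bar> \<le> B" "\<bar>q\<bar> \<le> B" "\<bar>y\<bar> \<le> B"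
  shows "(y - p)\<^sup>2 \<le> (y - q)\<^sup>2 + 4 * B * e"
proof -
  have "(y - p)\<^sup>2 - (y - q)\<^sup>2 = (q - p) * (2 * y - p - q)" by (simp add: power2_eq_square algebra_simps)
  also have "\<dots> \<le> \<bar>q - p\<bar> * \<bar>2 * y - p - q\<bar>" by (simp add: abs_mult[symmetric])
  also have "\<dots> \<le> e * (4 * B)"
    using assms by (intro mult_mono) (auto simp: abs_minus_commute abs_le_iff)
  finally show ?thesis by (simp add: algebra_simps)
qed

text \<open>On the rounds of \<open>I\<^sub>a\<close> the aggregate competes with the best start value \<open>j\<close>, the AMEG
  instance \<open>j\<close> with the best weights, and these with \<open>f\<close> up to the resolution \<open>\<gamma> / 2\<^sup>M\<^sup>+\<^sup>1\<close>
  of the finest level (\<open>dc_comparator\<close>).\<close>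

lemma dc_interval_regret:
  assumes \<gamma>: "\<gamma> > 0" "\<gamma> \<le> B" and N: "real N * \<gamma> = 1" and a: "1 \<le> a" "a \<le> N"
    and J: "real J * \<gamma> = 2 * B" and f: "f \<in> lip1_class B" and M: "M \<ge> 1"
    and y: "\<And>t. t \<in> dc_rounds \<gamma> a x \<Longrightarrow> t \<le> T \<Longrightarrow> \<bar>y t\<bar> \<le> B"
  defines "Ra \<equiv> {t\<in>dc_rounds \<gamma> a x. t \<le> T}"
  shows "(\<Sum>t\<in>Ra. (y t - dc_fa B \<gamma> M a x y t (x t))\<^sup>2) - (\<Sum>t\<in>Ra. (y t - f (x t))\<^sup>2)
           \<le> 32 * B\<^sup>2 * ln (real J + 1) + real (card Ra) * (2 * B * \<gamma> / 2 ^ M)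
             + 48 * B * \<gamma> * real M * sqrt (1 + real (card Ra))"
proof -
  obtain j us where j: "j \<le> J" and us: "us \<in> simplex_prod (dc_blocks M) (\<lambda>_. 2)"
    and us_f: "\<And>z. z \<in> dc_I \<gamma> a \<Longrightarrow> \<bar>dc_f B \<gamma> M a j us z - f z\<bar> \<le> \<gamma> / 2 ^ (M + 1)"
    and us_B: "\<And>z. z \<in> dc_I \<gamma> a \<Longrightarrow> \<bar>dc_f B \<gamma> M a j us z\<bar> \<le> B"
    using dc_comparator[OF \<gamma>(1) N a J f M] by blast
  have "real j * \<gamma> \<le> real J * \<gamma>" using j \<gamma> by (intro mult_right_mono) auto
  then have instance_regret: "(\<Sum>t\<in>Ra. dc_loss B \<gamma> M a j x y t (dc_u B \<gamma> M a j x y t) - dc_loss B \<gamma> M a j x y t us)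
      \<le> 48 * B * \<gamma> * real M * sqrt (1 + real (card Ra))"
    using dc_instance_regret[OF \<gamma> _ y us] J unfolding Ra_def by simp
  have "dc_loss B \<gamma> M a j x y t us \<le> (y t - f (x t))\<^sup>2 + 2 * B * \<gamma> / 2 ^ M" if t: "t \<in> Ra" for t
  proof -
    have "x t \<in> dc_I \<gamma> a" "x t \<in> {0..1}" "\<bar>y t\<bar> \<le> B"
      using t y dc_I_subset_unit[OF \<gamma>(1) N a] by (auto simp: Ra_def dc_rounds_def)
    then show ?thesis
      using square_loss_perturb[OF us_f us_B lip1_classD(1)[OF f]] by (simp add: dc_loss_def field_simps)
  qed
  then have "(\<Sum>t\<in>Ra. dc_loss B \<gamma> M a j x y t us) \<le> (\<Sum>t\<in>Ra. (y t - f (x t))\<^sup>2 + 2 * B * \<gamma> / 2 ^ M)"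
    by (rule sum_mono)
  then have "(\<Sum>t\<in>Ra. dc_loss B \<gamma> M a j x y t us)
      \<le> (\<Sum>t\<in>Ra. (y t - f (x t))\<^sup>2) + real (card Ra) * (2 * B * \<gamma> / 2 ^ M)"
    by (simp add: sum.distrib)
  moreover have "(\<Sum>t\<in>Ra. (y t - dc_fa B \<gamma> M a x y t (x t))\<^sup>2)
      \<le> (\<Sum>t\<in>Ra. dc_loss B \<gamma> M a j x y t (dc_u B \<gamma> M a j x y t)) + 32 * B\<^sup>2 * ln (real J + 1)"
    using dc_aggregation_regret[OF \<gamma> J j y] unfolding Ra_def by (simp add: dc_loss_def dc_fj_def)
  ultimately show ?thesis using instance_regret by (simp add: sum_subtractf)
qed

section \<open>Total regret and tuning\<close>

lemma dc_I_partition: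
  assumes \<gamma>: "\<gamma> > 0" and N: "real N * \<gamma> = 1" and z: "z \<in> {0..1}"
  obtains a0 where "a0 \<in> {1..N}" "\<And>a. a \<in> {1..N} \<Longrightarrow> z \<in> dc_I \<gamma> a \<longleftrightarrow> a = a0"
  using dc_I_cover[OF \<gamma> N z] dc_I_unique[OF \<gamma> N] by (metis atLeastAtMost_iff)

lemma dc_A_eq:
  assumes "real N * \<gamma> = 1" shows "dc_A \<gamma> = N"
proof -
  have "\<gamma> \<noteq> 0" using assms by auto
  then have "1 / \<gamma> = real N" using assms by (simp add: field_simps)
  then show ?thesis by (simp add: dc_A_def)
qed

lemma sum_split_dc_rounds:
  fixes g :: "nat \<Rightarrow> real"
  assumes \<gamma>: "\<gamma> > 0" and N: "real N * \<gamma> = 1" and x: "\<And>t. t \<in> {1..T} \<Longrightarrow> x t \<in> {0..1}"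
  shows "(\<Sum>t=1..T. g t) = (\<Sum>a=1..N. \<Sum>t\<in>{t\<in>dc_rounds \<gamma> a x. t \<le> T}. g t)"
proof -
  have "{t\<in>dc_rounds \<gamma> a x. t \<le> T} = {t\<in>{1..T}. x t \<in> dc_I \<gamma> a}" for a
    by (auto simp: dc_rounds_def)
  then have "(\<Sum>a=1..N. \<Sum>t\<in>{t\<in>dc_rounds \<gamma> a x. t \<le> T}. g t)
      = (\<Sum>a=1..N. \<Sum>t=1..T. if x t \<in> dc_I \<gamma> a then g t else 0)"
    by (simp only: sum.inter_filter[OF finite_atLeastAtMost])
  also have "\<dots> = (\<Sum>t=1..T. \<Sum>a=1..N. if x t \<in> dc_I \<gamma> a then g t else 0)"
    by (rule sum.swap)
  also have "\<dots> = (\<Sum>t=1..T. g t)"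
  proof (rule sum.cong[OF refl])
    fix t assume "t \<in> {1..T}"
    then obtain a0 where a0: "a0 \<in> {1..N}" "\<And>a. a \<in> {1..N} \<Longrightarrow> x t \<in> dc_I \<gamma> a \<longleftrightarrow> a = a0"
      using dc_I_partition[OF \<gamma> N x] by blast
    then show "(\<Sum>a=1..N. if x t \<in> dc_I \<gamma> a then g t else 0) = g t"
      by (simp add: sum.delta' cong: if_cong)
  qed
  finally show ?thesis ..
qed

lemma dc_pred_eq:
  assumes \<gamma>: "\<gamma> > 0" and N: "real N * \<gamma> = 1" and a: "1 \<le> a" "a \<le> N" and x: "x t \<in> dc_I \<gamma> a"
  shows "dc_pred B \<gamma> M x y t = dc_fa B \<gamma> M a x y t (x t)"
proof -
  have "x t \<in> dc_I \<gamma> a' \<longleftrightarrow> a' = a" if "a' \<in> {1..N}" for a'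
    using dc_I_unique[OF \<gamma> N _ _ a, of a' "x t"] that x by auto
  then show ?thesis
    using a unfolding dc_pred_def dc_A_eq[OF N] by (simp add: indicator_def sum.delta' cong: if_cong)
qed

lemma sum_sqrt_le_am_gm:
  fixes n :: "'a \<Rightarrow> real" and c :: real
  assumes "c > 0" "\<And>a. a \<in> A \<Longrightarrow> n a \<ge> 0"
  shows "(\<Sum>a\<in>A. sqrt (n a)) \<le> ((\<Sum>a\<in>A. n a) / c + real (card A) * c) / 2"
proof -
  have "sqrt (n a) \<le> (n a / c + c) / 2" if "a \<in> A" for a
  proof -
    have "0 \<le> (sqrt (n a) - c)\<^sup>2" by simp
    then have "2 * c * sqrt (n a) \<le> n a + c\<^sup>2"
      using assms that by (simp add: power2_eq_square algebra_simps)
    then show ?thesis using assms(1) by (simp add: field_simps power2_eq_square)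
  qed
  then have "(\<Sum>a\<in>A. sqrt (n a)) \<le> (\<Sum>a\<in>A. (n a / c + c) / 2)" by (rule sum_mono)
  also have "\<dots> = ((\<Sum>a\<in>A. n a) / c + real (card A) * c) / 2"
    by (simp add: sum.distrib sum_divide_distrib[symmetric] add_divide_distrib)
  finally show ?thesis .
qed

lemma dc_regret_le:
  assumes \<gamma>: "\<gamma> > 0" "\<gamma> \<le> B" and N: "real N * \<gamma> = 1" and J: "real J * \<gamma> = 2 * B"
    and M: "M \<ge> 1" and f: "f \<in> lip1_class B" and c: "c > 0"
    and x: "\<And>t. t \<in> {1..T} \<Longrightarrow> x t \<in> {0..1}" and y: "\<And>t. t \<in> {1..T} \<Longrightarrow> \<bar>y t\<bar> \<le> B"
  shows "(\<Sum>t=1..T. (y t - dc_pred B \<gamma> M x y t)\<^sup>2) - (\<Sum>t=1..T. (y t - f (x t))\<^sup>2)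
           \<le> real N * (32 * B\<^sup>2 * ln (real J + 1) + 48 * B * \<gamma> * real M)
             + real T * (2 * B * \<gamma> / 2 ^ M) + 48 * B * \<gamma> * real M * ((real T / c + real N * c) / 2)"
proof -
  define R where "R a = {t\<in>dc_rounds \<gamma> a x. t \<le> T}" for a
  define n where "n a = real (card (R a))" for a
  define C where "C = 32 * B\<^sup>2 * ln (real J + 1)"
  define K where "K = 2 * B * \<gamma> / 2 ^ M"
  define D where "D = 48 * B * \<gamma> * real M"
  have D: "D \<ge> 0" using \<gamma> by (simp add: D_def)
  have R: "t \<in> {1..T}" "x t \<in> dc_I \<gamma> a" if "t \<in> R a" for t a
    using that by (auto simp: R_def dc_rounds_def)
  have sum_n: "(\<Sum>a=1..N. n a) = real T"
    using sum_split_dc_rounds[OF \<gamma>(1) N x, where g="\<lambda>_. 1"] by (simp add: n_def R_def)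
  have "(\<Sum>t=1..T. (y t - dc_pred B \<gamma> M x y t)\<^sup>2) - (\<Sum>t=1..T. (y t - f (x t))\<^sup>2)
      = (\<Sum>t=1..T. (y t - dc_pred B \<gamma> M x y t)\<^sup>2 - (y t - f (x t))\<^sup>2)"
    by (simp add: sum_subtractf)
  also have "\<dots> = (\<Sum>a=1..N. \<Sum>t\<in>R a. (y t - dc_pred B \<gamma> M x y t)\<^sup>2 - (y t - f (x t))\<^sup>2)"
    unfolding R_def by (rule sum_split_dc_rounds[OF \<gamma>(1) N x])
  also have "\<dots> = (\<Sum>a=1..N. \<Sum>t\<in>R a. (y t - dc_fa B \<gamma> M a x y t (x t))\<^sup>2 - (y t - f (x t))\<^sup>2)"
    using dc_pred_eq[OF \<gamma>(1) N] R by (intro sum.cong refl) auto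
  also have "\<dots> = (\<Sum>a=1..N. (\<Sum>t\<in>R a. (y t - dc_fa B \<gamma> M a x y t (x t))\<^sup>2)
                         - (\<Sum>t\<in>R a. (y t - f (x t))\<^sup>2))"
    by (simp add: sum_subtractf)
  also have "\<dots> \<le> (\<Sum>a=1..N. C + n a * K + D * (1 + sqrt (n a)))"
  proof (rule sum_mono)
    fix a assume a: "a \<in> {1..N}"
    have "\<And>t. t \<in> dc_rounds \<gamma> a x \<Longrightarrow> t \<le> T \<Longrightarrow> \<bar>y t\<bar> \<le> B"
      using y by (auto simp: dc_rounds_def)
    then have "(\<Sum>t\<in>R a. (y t - dc_fa B \<gamma> M a x y t (x t))\<^sup>2) - (\<Sum>t\<in>R a. (y t - f (x t))\<^sup>2)
        \<le> C + n a * K + D * sqrt (1 + n a)"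
      using dc_interval_regret[OF \<gamma> N _ _ J f M] a unfolding R_def n_def C_def K_def D_def by auto
    moreover have "sqrt (1 + n a) \<le> 1 + sqrt (n a)"
      by (rule real_le_lsqrt) (auto simp: n_def power2_eq_square algebra_simps)
    then have "D * sqrt (1 + n a) \<le> D * (1 + sqrt (n a))"
      using D by (rule mult_left_mono)
    ultimately show "(\<Sum>t\<in>R a. (y t - dc_fa B \<gamma> M a x y t (x t))\<^sup>2) - (\<Sum>t\<in>R a. (y t - f (x t))\<^sup>2)
        \<le> C + n a * K + D * (1 + sqrt (n a))" by linarith
  qed
  also have "\<dots> = real N * (C + D) + (\<Sum>a=1..N. n a) * K + D * (\<Sum>a=1..N. sqrt (n a))"
    by (simp add: sum.distrib sum_distrib_left sum_distrib_right distrib_left distrib_right)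
  also have "\<dots> \<le> real N * (C + D) + real T * K + D * ((real T / c + real N * c) / 2)"
    using mult_left_mono[OF sum_sqrt_le_am_gm[OF c, of "{1..N}" n] D] sum_n by (simp add: n_def)
  finally show ?thesis unfolding C_def K_def D_def .
qed

lemma cube_root_facts:
  fixes T :: nat assumes T: "T \<ge> 2"
  defines "s \<equiv> real T powr (1/3)"
  shows "s > 1" "s ^ 3 = real T" "s \<le> real T" "real T powr (-1/3) = 1 / s"
proof -
  have T1: "real T > 1" using T by simp
  have "(1::real) powr (1/3) < real T powr (1/3)" by (rule powr_less_mono2) (use T1 in auto)
  then show "s > 1" by (simp add: s_def)
  have "s ^ 3 = real T powr (real 3 * (1/3))" unfolding s_def by (rule powr_power) (use T1 in auto)
  then show "s ^ 3 = real T" using T1 by simp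
  have "real T powr (1/3) \<le> real T powr 1" by (rule powr_mono) (use T1 in auto)
  then show "s \<le> real T" using T1 by (simp add: s_def)
  have "real T powr (-1/3) = inverse (real T powr (1/3))" by (simp add: powr_minus[symmetric])
  then show "real T powr (-1/3) = 1 / s" by (simp add: s_def inverse_eq_divide)
qed

lemma tuned_level_bounds:
  fixes s L :: real and M :: nat
  assumes s: "s > 1" and L: "L = 3 * ln s" "L \<ge> 1/2" and M: "M = nat \<lceil>log 2 (s\<^sup>2)\<rceil>"
  shows "M \<ge> 1" "(2::real) ^ M \<ge> s\<^sup>2" "real M \<le> 4 * L"
proof -
  have s2: "s\<^sup>2 > 1" using s by (simp add: one_less_power)
  then have log_pos: "log 2 (s\<^sup>2) > 0" by (subst zero_less_log_cancel_iff) auto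
  then show "M \<ge> 1" unfolding M by linarith
  have "(2::real) powr (log 2 (s\<^sup>2)) \<le> 2 powr (real M)" unfolding M using log_pos by (intro powr_mono) auto
  moreover have "(2::real) powr (log 2 (s\<^sup>2)) = s\<^sup>2" by (rule powr_log_cancel) (use s2 in auto)
  ultimately show "(2::real) ^ M \<ge> s\<^sup>2" by (simp add: powr_realpow)
  have "ln (exp (1/2::real)) \<le> ln 2" using exp_half_le2 by (subst ln_le_cancel_iff) auto
  then have "2 * ln s / ln 2 \<le> 2 * ln s / (1/2)" using s by (intro divide_left_mono) auto
  then have "log 2 (s\<^sup>2) \<le> 4 * ln s" using s by (simp add: log_def ln_realpow)
  moreover have "real M \<le> log 2 (s\<^sup>2) + 1" unfolding M using log_pos by linarith
  ultimately show "real M \<le> 4 * L" using L by linarith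
qed

lemma tuned_bound_arith:
  fixes B s L lJ \<gamma> :: real and N M T :: nat
  assumes B: "B > 0" and s: "s \<ge> 1" and L: "L \<ge> 1/2" and lJ: "lJ \<le> 3 * L"
    and hML: "real M \<le> 4 * L" and N: "real N = s / B" and g: "\<gamma> = B / s" and T: "real T = s ^ 3"
    and M2: "(2::real) ^ M \<ge> s\<^sup>2"
  shows "real N * (32 * B\<^sup>2 * lJ + 48 * B * \<gamma> * real M) + real T * (2 * B * \<gamma> / 2 ^ M)
           + 48 * B * \<gamma> * real M * ((real T / (s * B) + real N * (s * B)) / 2)
         \<le> 500 * max B (B\<^sup>2) * s * L"
proof -
  define mx where "mx = max B (B\<^sup>2)"
  have mxB: "B \<le> mx" "B\<^sup>2 \<le> mx" by (auto simp: mx_def)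
  have spos: "s > 0" using s by simp
  have sL: "s * L \<ge> 1/2"
  proof -
    have "1 * (1/2) \<le> s * L" using s L by (intro mult_mono) auto
    then show ?thesis by simp
  qed
  have Lpos: "L > 0" using L by simp
  have t1: "real N * (32 * B\<^sup>2 * lJ) \<le> 96 * B * s * L"
  proof -
    have "real N * (32 * B\<^sup>2 * lJ) = 32 * B * s * lJ" using B spos unfolding N by (simp add: field_simps power2_eq_square)
    also have "\<dots> \<le> 32 * B * s * (3 * L)" using lJ B spos by (intro mult_left_mono) auto
    finally show ?thesis by simp
  qed
  have t2: "(2 * B * \<gamma> / 2 ^ M) * real T \<le> 4 * B\<^sup>2 * s * L"
  proof -
    have p: "(2::real) ^ M > 0" by simp
    have "(2 * B * \<gamma> / 2 ^ M) * real T = 2 * B\<^sup>2 * (s\<^sup>2 / 2 ^ M)" unfolding g T using spos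
      by (simp add: field_simps power2_eq_square power3_eq_cube)
    also have "\<dots> \<le> 2 * B\<^sup>2 * 1" using M2 p by (intro mult_left_mono) (auto simp: divide_le_eq)
    also have "\<dots> \<le> 2 * B\<^sup>2 * (2 * (s * L))" using sL by (intro mult_left_mono) auto
    finally show ?thesis by (simp add: algebra_simps)
  qed
  have t3: "48 * B * \<gamma> * real M * real N \<le> 192 * B * s * L"
  proof -
    have "48 * B * \<gamma> * real M * real N = 48 * B * real M" unfolding g N using B spos by (simp add: field_simps)
    also have "\<dots> \<le> 48 * B * (4 * L)" using hML B by (intro mult_left_mono) auto
    also have "\<dots> \<le> 48 * B * (4 * (s * L))" using s Lpos B by (intro mult_left_mono) auto
    finally show ?thesis by simp
  qed
  have t4: "48 * B * \<gamma> * real M * ((real T / (s * B) + real N * (s * B)) / 2) \<le> 96 * (B + B\<^sup>2) * s * L"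
  proof -
    have "48 * B * \<gamma> * real M * ((real T / (s * B) + real N * (s * B)) / 2) = 24 * real M * s * (B + B\<^sup>2)"
      unfolding g N T using B spos by (simp add: field_simps power2_eq_square power3_eq_cube)
    also have "\<dots> \<le> 24 * (4 * L) * s * (B + B\<^sup>2)" using hML B spos
      by (intro mult_right_mono) (auto intro: add_nonneg_nonneg)
    finally show ?thesis by (simp add: algebra_simps)
  qed
  have "96 * B * s * L + 4 * B\<^sup>2 * s * L + 192 * B * s * L + 96 * (B + B\<^sup>2) * s * L = (384 * B + 100 * B\<^sup>2) * (s * L)"
    by (simp add: algebra_simps)
  also have "\<dots> \<le> (384 * mx + 100 * mx) * (s * L)" using mxB spos Lpos by (intro mult_right_mono) auto
  also have "\<dots> \<le> 500 * mx * s * L" using mxB B spos Lpos by (simp add: algebra_simps)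
  finally have "96 * B * s * L + 4 * B\<^sup>2 * s * L + 192 * B * s * L + 96 * (B + B\<^sup>2) * s * L
      \<le> 500 * mx * s * L" .
  moreover have "real N * (32 * B\<^sup>2 * lJ + 48 * B * \<gamma> * real M) + real T * (2 * B * \<gamma> / 2 ^ M)
      + 48 * B * \<gamma> * real M * ((real T / (s * B) + real N * (s * B)) / 2)
      = real N * (32 * B\<^sup>2 * lJ) + (2 * B * \<gamma> / 2 ^ M) * real T + 48 * B * \<gamma> * real M * real N
        + 48 * B * \<gamma> * real M * ((real T / (s * B) + real N * (s * B)) / 2)"
    by (simp add: algebra_simps)
  ultimately show ?thesis using t1 t2 t3 t4 unfolding mx_def by linarith
qed

lemma tuned_log_bounds:
  fixes s :: real and T J :: nat
  assumes T: "T \<ge> 2" and s: "s > 1" "s ^ 3 = real T" "s \<le> real T" and J: "real J = 2 * s"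
  shows "ln (real T) = 3 * ln s" "ln (real T) \<ge> 1/2" "ln (real J + 1) \<le> 3 * ln (real T)"
proof -
  have "ln (s ^ 3) = 3 * ln s" using s(1) by (simp add: ln_realpow)
  then show "ln (real T) = 3 * ln s" unfolding s(2) .
  have "ln (exp (1/2::real)) \<le> ln 2" using exp_half_le2 by (subst ln_le_cancel_iff) auto
  moreover have "ln 2 \<le> ln (real T)" using T by simp
  ultimately show "ln (real T) \<ge> 1/2" by simp
  have "2 * 2 \<le> real T * real T" using T by (intro mult_mono) auto
  then have "real T * 3 \<le> real T * (real T * real T)" by (intro mult_left_mono) auto
  moreover have "real J + 1 \<le> 3 * real T" using J s T by linarith
  ultimately have "real J + 1 \<le> real T * (real T * real T)" by linarith
  then have "real J + 1 \<le> real T ^ 3" by (metis power3_eq_cube mult.assoc)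
  then have "ln (real J + 1) \<le> ln (real T ^ 3)" using T by (subst ln_le_cancel_iff) auto
  then show "ln (real J + 1) \<le> 3 * ln (real T)" using T by (simp add: ln_realpow)
qed

lemma dc_tuned_regret:
  fixes B \<gamma> :: real and T M :: nat and x y :: "nat \<Rightarrow> real" and f :: "real \<Rightarrow> real"
  assumes B: "0 < B" and T: "2 \<le> T"
    and x: "\<forall>t\<in>{1..T}. x t \<in> {0..1}" and y: "\<forall>t\<in>{1..T}. \<bar>y t\<bar> \<le> B"
    and N_int: "1 / \<gamma> \<in> \<int>" and J_int: "2 * B / \<gamma> \<in> \<int>"
    and \<gamma>_def: "\<gamma> = B * real T powr (-1/3)" and M_def: "M = nat \<lceil>log 2 (\<gamma> * real T / B)\<rceil>"
    and f: "f \<in> lip1_class B"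
  shows "(\<Sum>t=1..T. (y t - dc_pred B \<gamma> M x y t)\<^sup>2) - (\<Sum>t=1..T. (y t - f (x t))\<^sup>2)
           \<le> 500 * max B (B\<^sup>2) * real T powr (1/3) * ln (real T)"
proof -
  define s where "s = real T powr (1/3)"
  define L where "L = ln (real T)"
  have s: "s > 1" "s ^ 3 = real T" "s \<le> real T" and \<gamma>: "\<gamma> = B / s"
    using cube_root_facts[OF T] \<gamma>_def by (simp_all add: s_def)
  have \<gamma>_pos: "\<gamma> > 0" "\<gamma> \<le> B" using \<gamma> B s by (auto simp: divide_le_eq)
  have "s / B \<in> \<nat>" "2 * s \<in> \<nat>"
    using N_int J_int \<gamma> B s by (auto simp: Nats_altdef2)
  then obtain N J where N: "real N = s / B" and J: "real J = 2 * s"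
    by (metis Nats_cases)
  have L: "L = 3 * ln s" "L \<ge> 1/2" and ln_J: "ln (real J + 1) \<le> 3 * L"
    using tuned_log_bounds[OF T s J] unfolding L_def by auto
  have "\<gamma> * real T / B = (B / s) * s ^ 3 / B" using \<gamma> s(2) by simp
  also have "\<dots> = s\<^sup>2" using B s(1) by (simp add: power2_eq_square power3_eq_cube)
  finally have "\<gamma> * real T / B = s\<^sup>2" .
  then have M: "M \<ge> 1" "(2::real) ^ M \<ge> s\<^sup>2" "real M \<le> 4 * L"
    using tuned_level_bounds[OF s(1) L, of M] M_def by simp_all
  have "(\<Sum>t=1..T. (y t - dc_pred B \<gamma> M x y t)\<^sup>2) - (\<Sum>t=1..T. (y t - f (x t))\<^sup>2)
      \<le> real N * (32 * B\<^sup>2 * ln (real J + 1) + 48 * B * \<gamma> * real M) + real T * (2 * B * \<gamma> / 2 ^ M)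
        + 48 * B * \<gamma> * real M * ((real T / (s * B) + real N * (s * B)) / 2)"
    \<comment> \<open>\<open>c = s B\<close> balances the two terms of the AM-GM bound on \<open>\<Sum>\<^sub>a sqrt n\<^sub>a\<close>\<close>
    using N J \<gamma> B s x y
    by (intro dc_regret_le[OF \<gamma>_pos _ _ M(1) f]) (auto simp: field_simps)
  also have "\<dots> \<le> 500 * max B (B\<^sup>2) * s * L"
    using tuned_bound_arith[OF B _ L(2) ln_J M(3) N \<gamma> s(2)[symmetric] M(2)] s by simp
  finally show ?thesis unfolding s_def L_def .
qed

theorem theorem6:
  shows "\<exists>c>0. \<forall>(B::real) (T::nat) (x::nat \<Rightarrow> real) (y::nat \<Rightarrow> real).
     let \<gamma> = B * real T powr (-1/3);
         M = nat \<lceil>log 2 (\<gamma> * real T / B)\<rceil>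
     in (0 < B \<and> 2 \<le> T \<and> (\<forall>t\<in>{1..T}. x t \<in> {0..1}) \<and> (\<forall>t\<in>{1..T}. \<bar>y t\<bar> \<le> B)
         \<and> 1 / \<gamma> \<in> \<int> \<and> 2 * B / \<gamma> \<in> \<int>)
        \<longrightarrow> (\<Sum>t=1..T. (y t - dc_pred B \<gamma> M x y t)\<^sup>2)
            - (INF f\<in>lip1_class B. \<Sum>t=1..T. (y t - f (x t))\<^sup>2)
            \<le> c * max B (B\<^sup>2) * real T powr (1/3) * ln (real T)"
proof -
  have regret: "(\<Sum>t=1..T. (y t - dc_pred B \<gamma> M x y t)\<^sup>2) - (INF f\<in>lip1_class B. \<Sum>t=1..T. (y t - f (x t))\<^sup>2)
      \<le> 500 * max B (B\<^sup>2) * real T powr (1/3) * ln (real T)"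
    if "0 < B" "2 \<le> T" "\<forall>t\<in>{1..T}. x t \<in> {0..1}" "\<forall>t\<in>{1..T}. \<bar>y t\<bar> \<le> B"
      "1 / \<gamma> \<in> \<int>" "2 * B / \<gamma> \<in> \<int>"
      "\<gamma> = B * real T powr (-1/3)" "M = nat \<lceil>log 2 (\<gamma> * real T / B)\<rceil>"
    for B \<gamma> :: real and T M :: nat and x y :: "nat \<Rightarrow> real"
  proof -
    have "(\<lambda>_. 0) \<in> lip1_class B" using that by (simp add: lip1_class_def)
    then have "(\<Sum>t=1..T. (y t - dc_pred B \<gamma> M x y t)\<^sup>2) - 500 * max B (B\<^sup>2) * real T powr (1/3) * ln (real T)
        \<le> (INF f\<in>lip1_class B. \<Sum>t=1..T. (y t - f (x t))\<^sup>2)"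
      using dc_tuned_regret[OF that] by (intro cINF_greatest) (auto simp: algebra_simps)
    then show ?thesis by simp
  qed
  show ?thesis
    unfolding Let_def by (intro exI[of _ 500] conjI allI impI) (use regret in auto)
qed

end
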